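(* Let $\mu$ be a probability measure on $\mathbb R^d$ supported on the Euclidean ball $B(0,R)$, let $X_1,\dots,X_N$ be i.i.d. from $\mu$, and $\mu_N:=\frac1N\sum_{i=1}^N\delta_{X_i}$. Fix $\sigma>0$, let $\varphi_\sigma(x)=(2\pi\sigma^2)^{-d/2}\exp(-\|x\|^2/(2\sigma^2))$, and set $p:=\mu*\varphi_\sigma$, $q_N:=\mu_N*\varphi_\sigma=\frac1N\sum_i\varphi_\sigma(\cdot-X_i)$. Then for every $N\ge1$ and $\delta\in(0,1)$, with probability at least $1-\delta$, \[\mathrm{KL}(p\|q_N)\le\frac{2^{d/2}}{N}\exp\!\Big(\frac{17}{2}\frac{R^2}{\sigma^2}\Big)\Big(1+\sqrt{2\log(1/\delta)}\Big)^2.\] In particular, for any $a>0$, with probability at least $1-N^{-a}$, $\mathrm{KL}(p\|q_N)\le\frac{2^{d/2}}{N}\exp(\frac{17}{2}\frac{R^2}{\sigma^2})(1+\sqrt{2a\log N})^2$.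
   Context: $\mathrm{KL}(p\|q)=\int p\log(p/q)$ for densities $p,q$. *)

theory Defs
  imports "HOL-Probability.Probability"
begin

definition gauss_kernel :: "real \<Rightarrow> 'a::euclidean_space \<Rightarrow> real" where
  "gauss_kernel \<sigma> x =
     (2 * pi * \<sigma>\<^sup>2) powr (- real DIM('a) / 2) * exp (- (norm x)\<^sup>2 / (2 * \<sigma>\<^sup>2))"

definition KL_div :: "('a::euclidean_space \<Rightarrow> real) \<Rightarrow> ('a \<Rightarrow> real) \<Rightarrow> ereal" where
  "KL_div p q =
     (if integrable lborel (\<lambda>x. p x * ln (p x / q x))
      then ereal (\<integral>x. p x * ln (p x / q x) \<partial>lborel) else \<infinity>)"

end

theory Submission
  imports Defs
begin

text \<open>Every sample point lies in \<open>B(0, R)\<close>, so \<open>q\<^sub>N(z) \<ge> 1 / w(z)\<close> with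
  \<open>w(z) = (2 \<pi> \<sigma>\<^sup>2)\<^bsup>d/2\<^esup> exp ((\<parallel>z\<parallel> + R)\<^sup>2 / (2 \<sigma>\<^sup>2))\<close>,
  and the pointwise inequality \<open>p ln (p / q) \<le> (q - p)\<^sup>2 / q + p - q\<close>
  gives \<open>KL(p \<parallel> q\<^sub>N) \<le> F\<^sup>2\<close> for the weighted distance \<open>F = \<parallel>(q\<^sub>N - p) \<surd>w\<parallel>\<^sub>2\<close>.
  Since \<open>q\<^sub>N - p\<close> is an average of \<open>N\<close> independent centred kernels, \<open>E F\<^sup>2 \<le> K / N\<close> with
  \<open>K = sup\<^bsub>\<parallel>y\<parallel> \<le> R\<^esub> \<integral> \<phi>\<^sub>\<sigma>(z - y)\<^sup>2 w(z) dz \<le> 2\<^bsup>d/2\<^esup> exp (6 R\<^sup>2 / \<sigma>\<^sup>2)\<close>,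
  and replacing one sample changes \<open>F\<close> by at most \<open>2 \<surd>K / N\<close>.
  McDiarmid's inequality then yields \<open>F \<le> \<surd>(K / N) (1 + \<surd>(2 log (1 / \<delta>)))\<close>
  with probability at least \<open>1 - \<delta>\<close>.\<close>

section \<open>The Gaussian kernel\<close>

lemma nn_integral_gaussian_real:
  assumes s: "s > (0::real)"
  shows "(\<integral>\<^sup>+t. ennreal (exp (- t\<^sup>2 / (2 * s\<^sup>2))) \<partial>lborel) = ennreal (sqrt (2 * pi * s\<^sup>2))"
proof -
  have "(\<integral>\<^sup>+t. ennreal (normal_density 0 s t) \<partial>lborel) = 1"
    using s by (subst nn_integral_eq_integral) (auto simp: normal_density_nonneg)
  moreover have "(\<lambda>t. ennreal (exp (- t\<^sup>2 / (2 * s\<^sup>2))))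
      = (\<lambda>t. ennreal (sqrt (2 * pi * s\<^sup>2)) * ennreal (normal_density 0 s t))"
    using s by (auto simp: normal_density_def ennreal_mult[symmetric])
  ultimately show ?thesis by (simp add: nn_integral_cmult)
qed

lemma nn_integral_gaussian:
  assumes s: "s > (0::real)"
  shows "(\<integral>\<^sup>+x. ennreal (exp (- (norm (x::'a::euclidean_space))\<^sup>2 / (2 * s\<^sup>2))) \<partial>lborel)
     = ennreal ((2 * pi * s\<^sup>2) powr (real DIM('a) / 2))"
proof -
  have split: "ennreal (exp (- (norm x)\<^sup>2 / (2 * s\<^sup>2)))
      = (\<Prod>b\<in>Basis. ennreal (exp (- (x \<bullet> b)\<^sup>2 / (2 * s\<^sup>2))))" for x :: 'a
  proof -
    have "(norm x)\<^sup>2 = (\<Sum>b\<in>Basis. (x \<bullet> b) * (x \<bullet> b))"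
      by (simp only: power2_norm_eq_inner euclidean_inner[of x x])
    then have "(norm x)\<^sup>2 = (\<Sum>b\<in>Basis. (x \<bullet> b)\<^sup>2)"
      by (simp add: power2_eq_square)
    then have "exp (- (norm x)\<^sup>2 / (2 * s\<^sup>2)) = (\<Prod>b\<in>Basis. exp (- (x \<bullet> b)\<^sup>2 / (2 * s\<^sup>2)))"
      by (simp add: exp_sum[symmetric] sum_negf sum_divide_distrib)
    then show ?thesis by (simp add: prod_ennreal)
  qed
  have "(\<integral>\<^sup>+x. ennreal (exp (- (norm (x::'a))\<^sup>2 / (2 * s\<^sup>2))) \<partial>lborel)
      = (\<integral>\<^sup>+x. (\<Prod>b\<in>Basis. ennreal (exp (- ((x::'a) \<bullet> b)\<^sup>2 / (2 * s\<^sup>2)))) \<partial>lborel)"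
    by (simp only: split)
  also have "\<dots> = (\<Prod>b\<in>(Basis::'a set). \<integral>\<^sup>+t. ennreal (exp (- t\<^sup>2 / (2 * s\<^sup>2))) \<partial>lborel)"
    by (rule nn_integral_lborel_prod[where f="\<lambda>b t. ennreal (exp (- t\<^sup>2 / (2 * s\<^sup>2)))"]) auto
  also have "\<dots> = ennreal (sqrt (2 * pi * s\<^sup>2) ^ DIM('a))"
    using nn_integral_gaussian_real[OF s] by (simp add: ennreal_power)
  also have "sqrt (2 * pi * s\<^sup>2) ^ DIM('a) = ((2 * pi * s\<^sup>2) powr (1 / 2)) powr real DIM('a)"
    using s by (simp add: powr_half_sqrt powr_realpow)
  also have "\<dots> = (2 * pi * s\<^sup>2) powr (real DIM('a) / 2)"
    by (simp add: powr_powr)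
  finally show ?thesis .
qed

lemma nn_integral_lborel_translate:
  fixes f :: "'a::euclidean_space \<Rightarrow> ennreal"
  assumes [measurable]: "f \<in> borel_measurable borel"
  shows "(\<integral>\<^sup>+z. f (z - y) \<partial>lborel) = (\<integral>\<^sup>+z. f z \<partial>lborel)"
proof -
  have "(\<integral>\<^sup>+z. f (z - y) \<partial>lborel) = (\<integral>\<^sup>+z. f (z - y) \<partial>distr lborel borel ((+) y))"
    by (simp add: lborel_distr_plus)
  also have "\<dots> = (\<integral>\<^sup>+z. f z \<partial>lborel)"
    by (simp add: nn_integral_distr)
  finally show ?thesis .
qed

lemma gauss_kernel_borel_measurable [measurable]: "gauss_kernel s \<in> borel_measurable borel"
  unfolding gauss_kernel_def[abs_def] by measurable

lemma gauss_kernel_pos: "s > 0 \<Longrightarrow> gauss_kernel s x > 0"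
  by (simp add: gauss_kernel_def)

lemma gauss_kernel_le: "gauss_kernel s (x::'a::euclidean_space) \<le> (2 * pi * s\<^sup>2) powr (- real DIM('a) / 2)"
  by (auto simp: gauss_kernel_def intro!: mult_left_le)

lemma nn_integral_gauss_kernel:
  assumes s: "s > 0"
  shows "(\<integral>\<^sup>+z. ennreal (gauss_kernel s (z - y)) \<partial>lborel) = 1"
proof -
  let ?c = "(2 * pi * s\<^sup>2) powr (- real DIM('a) / 2)"
  have "(\<integral>\<^sup>+z. ennreal (gauss_kernel s (z - y)) \<partial>lborel) = (\<integral>\<^sup>+z. ennreal (gauss_kernel s (z::'a)) \<partial>lborel)"
    by (rule nn_integral_lborel_translate[where f="\<lambda>z. ennreal (gauss_kernel s z)"]) measurable
  also have "\<dots> = (\<integral>\<^sup>+z. ennreal ?c * ennreal (exp (- (norm (z::'a))\<^sup>2 / (2 * s\<^sup>2))) \<partial>lborel)"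
    by (simp add: gauss_kernel_def ennreal_mult)
  also have "\<dots> = ennreal ?c * ennreal ((2 * pi * s\<^sup>2) powr (real DIM('a) / 2))"
    using nn_integral_gaussian[OF s, where 'a='a] by (simp add: nn_integral_cmult)
  also have "\<dots> = 1"
    using s by (simp add: ennreal_mult[symmetric] powr_add[symmetric])
  finally show ?thesis .
qed

text \<open>\<open>1 / gauss_weight s r z\<close> is the minimum of \<open>gauss_kernel s (z - y)\<close> over the ball
  \<open>norm y \<le> r\<close>, hence a lower bound for every Gaussian mixture with mixing measure in that ball.\<close>
definition gauss_weight :: "real \<Rightarrow> real \<Rightarrow> 'a::euclidean_space \<Rightarrow> real" where
  "gauss_weight s r z = exp ((norm z + r)\<^sup>2 / (2 * s\<^sup>2)) / (2 * pi * s\<^sup>2) powr (- real DIM('a) / 2)"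

definition weighted_kernel_bound :: "real \<Rightarrow> real \<Rightarrow> 'a::euclidean_space itself \<Rightarrow> real" where
  "weighted_kernel_bound s r _ = 2 powr (real DIM('a) / 2) * exp (6 * r\<^sup>2 / s\<^sup>2)"

lemma gauss_weight_borel_measurable [measurable]: "gauss_weight s r \<in> borel_measurable borel"
  unfolding gauss_weight_def[abs_def] by measurable

lemma gauss_weight_pos: "s > 0 \<Longrightarrow> gauss_weight s r z > 0"
  by (simp add: gauss_weight_def)

lemma weighted_kernel_bound_pos: "weighted_kernel_bound s r TYPE('a::euclidean_space) > 0"
  by (simp add: weighted_kernel_bound_def)

lemma weighted_kernel_bound_le:
  "weighted_kernel_bound s r TYPE('a::euclidean_space) \<le> 2 powr (real DIM('a) / 2) * exp (17 / 2 * r\<^sup>2 / s\<^sup>2)"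
proof -
  have "6 * r\<^sup>2 / s\<^sup>2 \<le> 17 / 2 * r\<^sup>2 / s\<^sup>2"
    by (intro divide_right_mono mult_right_mono) auto
  then show ?thesis by (simp add: weighted_kernel_bound_def)
qed

lemma inverse_gauss_weight_le_gauss_kernel:
  fixes y z :: "'a::euclidean_space"
  assumes s: "s > 0" and y: "norm y \<le> r"
  shows "1 / gauss_weight s r z \<le> gauss_kernel s (z - y)"
proof -
  have "norm (z - y) \<le> norm z + r" using y norm_triangle_ineq4[of z y] by linarith
  then have "(norm (z - y))\<^sup>2 \<le> (norm z + r)\<^sup>2" by (intro power_mono) auto
  then have "exp (- (norm z + r)\<^sup>2 / (2 * s\<^sup>2)) \<le> exp (- (norm (z - y))\<^sup>2 / (2 * s\<^sup>2))"
    using s by (simp add: divide_right_mono)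
  then show ?thesis
    using s by (simp add: gauss_weight_def gauss_kernel_def exp_minus field_simps)
qed

lemma gauss_kernel_sq_weight_le:
  fixes y z :: "'a::euclidean_space"
  assumes s: "s > 0" and y: "norm y \<le> r"
  shows "(gauss_kernel s (z - y))\<^sup>2 * gauss_weight s r z
    \<le> weighted_kernel_bound s r TYPE('a) * gauss_kernel (sqrt 2 * s) (z - y)"
proof -
  define c where "c = (2 * pi * s\<^sup>2) powr (- real DIM('a) / 2)"
  define n where "n = norm (z - y)"
  define m where "m = norm z"
  define A where "A = - n\<^sup>2 / s\<^sup>2 + (m + r)\<^sup>2 / (2 * s\<^sup>2)"
  define B where "B = 6 * r\<^sup>2 / s\<^sup>2 - n\<^sup>2 / (4 * s\<^sup>2)"
  have r: "r \<ge> 0" using y norm_ge_zero order_trans by blast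
  have "m \<le> n + r" using y norm_triangle_ineq[of "z - y" y] by (simp add: m_def n_def)
  then have "(m + r)\<^sup>2 \<le> (n + 2 * r)\<^sup>2" using r by (intro power_mono) (auto simp: m_def)
  \<comment> \<open>together with \<open>0 \<le> (n - 4 r)\<^sup>2\<close>, this is where the constant \<open>6\<close> comes from\<close>
  then have "2 * (m + r)\<^sup>2 \<le> 3 * n\<^sup>2 + 24 * r\<^sup>2"
    using sum_squares_ge_zero[of "n - 4 * r" 0] by (simp add: power2_eq_square algebra_simps)
  then have "4 * s\<^sup>2 * A \<le> 4 * s\<^sup>2 * B"
    using s by (simp add: A_def B_def diff_divide_distrib add_divide_distrib algebra_simps)
  then have AB: "A \<le> B" using s by simp
  have "(gauss_kernel s (z - y))\<^sup>2 * gauss_weight s r z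
      = c * (exp (- n\<^sup>2 / (2 * s\<^sup>2)) * exp (- n\<^sup>2 / (2 * s\<^sup>2))) * exp ((m + r)\<^sup>2 / (2 * s\<^sup>2))"
    using s by (simp add: gauss_kernel_def gauss_weight_def c_def n_def m_def power2_eq_square field_simps)
  also have "\<dots> = c * exp (- n\<^sup>2 / (2 * s\<^sup>2) + - n\<^sup>2 / (2 * s\<^sup>2) + (m + r)\<^sup>2 / (2 * s\<^sup>2))"
    by (simp only: exp_add mult.assoc)
  also have "- n\<^sup>2 / (2 * s\<^sup>2) + - n\<^sup>2 / (2 * s\<^sup>2) + (m + r)\<^sup>2 / (2 * s\<^sup>2) = A"
    using s by (simp add: A_def field_simps)
  finally have lhs: "(gauss_kernel s (z - y))\<^sup>2 * gauss_weight s r z = c * exp A" .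
  have "(2 * pi * (sqrt 2 * s)\<^sup>2) powr (- real DIM('a) / 2) = 2 powr (- real DIM('a) / 2) * c"
    using s by (simp add: c_def power_mult_distrib powr_mult[symmetric] mult.assoc)
  then have rhs: "weighted_kernel_bound s r TYPE('a) * gauss_kernel (sqrt 2 * s) (z - y) = c * exp B"
    using s by (simp add: weighted_kernel_bound_def gauss_kernel_def B_def n_def[symmetric]
       power_mult_distrib exp_diff powr_add[symmetric] exp_add[symmetric] field_simps)
  show ?thesis unfolding lhs rhs using AB s by (simp add: c_def)
qed

lemma nn_integral_gauss_kernel_sq_weight_le:
  fixes y :: "'a::euclidean_space"
  assumes s: "s > 0" and y: "norm y \<le> r"
  shows "(\<integral>\<^sup>+z. ennreal ((gauss_kernel s (z - y))\<^sup>2 * gauss_weight s r z) \<partial>lborel)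
    \<le> ennreal (weighted_kernel_bound s r TYPE('a))"
proof -
  have "(\<integral>\<^sup>+z. ennreal ((gauss_kernel s (z - y))\<^sup>2 * gauss_weight s r z) \<partial>lborel)
      \<le> (\<integral>\<^sup>+z. ennreal (weighted_kernel_bound s r TYPE('a)) * ennreal (gauss_kernel (sqrt 2 * s) (z - y)) \<partial>lborel)"
  proof (rule nn_integral_mono)
    fix z
    have "ennreal ((gauss_kernel s (z - y))\<^sup>2 * gauss_weight s r z)
        \<le> ennreal (weighted_kernel_bound s r TYPE('a) * gauss_kernel (sqrt 2 * s) (z - y))"
      by (rule ennreal_leI) (rule gauss_kernel_sq_weight_le[OF s y])
    also have "\<dots> = ennreal (weighted_kernel_bound s r TYPE('a)) * ennreal (gauss_kernel (sqrt 2 * s) (z - y))"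
      using weighted_kernel_bound_pos[where 'a='a] gauss_kernel_pos[of "sqrt 2 * s"] s
      by (intro ennreal_mult) (auto intro: less_imp_le)
    finally show "ennreal ((gauss_kernel s (z - y))\<^sup>2 * gauss_weight s r z) \<le> \<dots>" .
  qed
  also have "\<dots> = ennreal (weighted_kernel_bound s r TYPE('a))"
    using s by (simp add: nn_integral_cmult nn_integral_gauss_kernel)
  finally show ?thesis .
qed

section \<open>An \<open>L\<^sup>2\<close> norm and McDiarmid's inequality\<close>

text \<open>The junk value \<open>0\<close> is taken when \<open>f\<close> is not square integrable, so the lemmas below carry
  finiteness of \<open>\<integral>\<^sup>+x. (f x)\<^sup>2 \<partial>M\<close> as a hypothesis.\<close>
definition L2_norm :: "'a measure \<Rightarrow> ('a \<Rightarrow> real) \<Rightarrow> real" where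
  "L2_norm M f = sqrt (enn2real (\<integral>\<^sup>+x. ennreal ((f x)\<^sup>2) \<partial>M))"

lemma L2_norm_nonneg: "L2_norm M f \<ge> 0"
  by (simp add: L2_norm_def)

lemma L2_norm_uminus: "L2_norm M (\<lambda>x. - f x) = L2_norm M f"
  by (simp add: L2_norm_def)

lemma L2_norm_power2: "(L2_norm M f)\<^sup>2 = enn2real (\<integral>\<^sup>+x. ennreal ((f x)\<^sup>2) \<partial>M)"
  by (simp add: L2_norm_def)

lemma L2_norm_le_sqrt:
  assumes "(\<integral>\<^sup>+x. ennreal ((f x)\<^sup>2) \<partial>M) \<le> ennreal b" "b \<ge> 0"
  shows "L2_norm M f \<le> sqrt b"
  using assms by (simp add: L2_norm_def enn2real_leI)

lemma nn_integral_abs_mult_le_sqrt: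
  fixes f g :: "'a \<Rightarrow> real"
  assumes [measurable]: "f \<in> borel_measurable M" "g \<in> borel_measurable M"
    and a: "(\<integral>\<^sup>+x. ennreal ((f x)\<^sup>2) \<partial>M) = ennreal a" "a \<ge> 0"
    and b: "(\<integral>\<^sup>+x. ennreal ((g x)\<^sup>2) \<partial>M) = ennreal b" "b \<ge> 0"
  shows "(\<integral>\<^sup>+x. ennreal (\<bar>f x\<bar> * \<bar>g x\<bar>) \<partial>M) \<le> ennreal (sqrt a * sqrt b)"
proof -
  define X where "X = (\<integral>\<^sup>+x. ennreal (\<bar>f x\<bar> * \<bar>g x\<bar>) \<partial>M)"
  have "(\<integral>\<^sup>+x. ennreal \<bar>f x\<bar> * ennreal \<bar>g x\<bar> \<partial>M)\<^sup>2
      \<le> (\<integral>\<^sup>+x. ennreal \<bar>f x\<bar> ^ 2 \<partial>M) * (\<integral>\<^sup>+x. ennreal \<bar>g x\<bar> ^ 2 \<partial>M)"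
    by (rule Cauchy_Schwarz_nn_integral) measurable
  then have CS: "X\<^sup>2 \<le> ennreal a * ennreal b"
    using a b by (simp add: X_def ennreal_mult[symmetric] ennreal_power)
  then have "X\<^sup>2 < \<infinity>"
    using a b by (auto simp: ennreal_mult[symmetric] top_unique intro: le_less_trans)
  then obtain x where x: "X = ennreal x" "x \<ge> 0"
    by (cases X) (auto simp: power_less_top_ennreal)
  have "x\<^sup>2 \<le> a * b" using CS a b x by (simp add: ennreal_power ennreal_mult[symmetric])
  then have "sqrt (x\<^sup>2) \<le> sqrt (a * b)" by (rule real_sqrt_le_mono)
  then show ?thesis using x by (simp add: X_def[symmetric] real_sqrt_mult)
qed

lemma L2_norm_triangle:
  fixes f g :: "'a \<Rightarrow> real"
  assumes [measurable]: "f \<in> borel_measurable M" "g \<in> borel_measurable M"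
    and f: "(\<integral>\<^sup>+x. ennreal ((f x)\<^sup>2) \<partial>M) < \<infinity>" and g: "(\<integral>\<^sup>+x. ennreal ((g x)\<^sup>2) \<partial>M) < \<infinity>"
  shows "(\<integral>\<^sup>+x. ennreal ((f x + g x)\<^sup>2) \<partial>M) < \<infinity>"
    and "L2_norm M (\<lambda>x. f x + g x) \<le> L2_norm M f + L2_norm M g"
proof -
  obtain a where a: "(\<integral>\<^sup>+x. ennreal ((f x)\<^sup>2) \<partial>M) = ennreal a" "a \<ge> 0"
    using f by (cases "\<integral>\<^sup>+x. ennreal ((f x)\<^sup>2) \<partial>M") auto
  obtain b where b: "(\<integral>\<^sup>+x. ennreal ((g x)\<^sup>2) \<partial>M) = ennreal b" "b \<ge> 0"
    using g by (cases "\<integral>\<^sup>+x. ennreal ((g x)\<^sup>2) \<partial>M") auto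
  have "(\<integral>\<^sup>+x. ennreal ((f x + g x)\<^sup>2) \<partial>M)
      \<le> (\<integral>\<^sup>+x. ennreal ((f x)\<^sup>2) + ennreal ((g x)\<^sup>2) + 2 * ennreal (\<bar>f x\<bar> * \<bar>g x\<bar>) \<partial>M)"
  proof (rule nn_integral_mono)
    fix x
    have "(f x + g x)\<^sup>2 \<le> (f x)\<^sup>2 + (g x)\<^sup>2 + 2 * (\<bar>f x\<bar> * \<bar>g x\<bar>)"
      by (simp add: power2_eq_square algebra_simps abs_mult[symmetric])
    then have "ennreal ((f x + g x)\<^sup>2) \<le> ennreal ((f x)\<^sup>2 + (g x)\<^sup>2 + 2 * (\<bar>f x\<bar> * \<bar>g x\<bar>))"
      by (rule ennreal_leI)
    also have "\<dots> = ennreal ((f x)\<^sup>2) + ennreal ((g x)\<^sup>2) + 2 * ennreal (\<bar>f x\<bar> * \<bar>g x\<bar>)"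
      by (simp add: ennreal_plus ennreal_mult)
    finally show "ennreal ((f x + g x)\<^sup>2) \<le> \<dots>" .
  qed
  also have "\<dots> = ennreal a + ennreal b + 2 * (\<integral>\<^sup>+x. ennreal (\<bar>f x\<bar> * \<bar>g x\<bar>) \<partial>M)"
    unfolding a(1)[symmetric] b(1)[symmetric] by (simp add: nn_integral_add nn_integral_cmult)
  also have "\<dots> \<le> ennreal a + ennreal b + 2 * ennreal (sqrt a * sqrt b)"
    using nn_integral_abs_mult_le_sqrt[OF _ _ a b] by (intro add_left_mono mult_left_mono) auto
  also have "\<dots> = ennreal (a + b + 2 * (sqrt a * sqrt b))"
    using a b by (simp add: ennreal_plus ennreal_mult)
  also have "a + b + 2 * (sqrt a * sqrt b) = (sqrt a + sqrt b)\<^sup>2"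
    using a b by (simp add: power2_eq_square algebra_simps)
  finally have S: "(\<integral>\<^sup>+x. ennreal ((f x + g x)\<^sup>2) \<partial>M) \<le> ennreal ((sqrt a + sqrt b)\<^sup>2)" .
  then show "(\<integral>\<^sup>+x. ennreal ((f x + g x)\<^sup>2) \<partial>M) < \<infinity>"
    using le_less_trans[OF S ennreal_less_top] by simp
  have "L2_norm M (\<lambda>x. f x + g x) \<le> sqrt ((sqrt a + sqrt b)\<^sup>2)"
    using S by (rule L2_norm_le_sqrt) simp
  then show "L2_norm M (\<lambda>x. f x + g x) \<le> L2_norm M f + L2_norm M g"
    using a b by (simp add: L2_norm_def)
qed

lemma (in prob_space) Hoeffdings_lemma_bounded_oscillation:
  fixes h :: "'a \<Rightarrow> real"
  assumes [measurable]: "h \<in> borel_measurable M" and l: "l > 0"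
    and osc: "\<And>y y'. y \<in> space M \<Longrightarrow> y' \<in> space M \<Longrightarrow> h y' - h y \<le> c"
  shows "(\<integral>\<^sup>+y. ennreal (exp (l * (h y - expectation h))) \<partial>M) \<le> ennreal (exp (l\<^sup>2 * c\<^sup>2 / 8))"
proof -
  obtain y0 where y0: "y0 \<in> space M" using not_empty by blast
  define a where "a = (INF y\<in>space M. h y)"
  have "bdd_below (h ` space M)"
    using osc[OF _ y0] by (intro bdd_belowI[where m="h y0 - c"]) force
  then have lo: "a \<le> h y" if "y \<in> space M" for y
    unfolding a_def using that by (rule cINF_lower)
  have hi: "h y \<le> a + c" if "y \<in> space M" for y
  proof -
    have "h y - c \<le> a"
      unfolding a_def using osc[OF _ that] not_empty by (intro cINF_greatest) force+
    then show ?thesis by simp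
  qed
  interpret interval_bounded_random_variable M h a "a + c"
    by unfold_locales (use lo hi in auto)
  show ?thesis using Hoeffdings_lemma_nn_integral[OF l] by simp
qed

locale bounded_differences = prob_space M for M :: "'a measure" +
  fixes I :: "'i set" and f :: "('i \<Rightarrow> 'a) \<Rightarrow> real" and B c :: real
  assumes f_measurable [measurable]: "f \<in> borel_measurable (PiM I (\<lambda>_. M))"
    and f_bounded: "\<And>x. x \<in> space (PiM I (\<lambda>_. M)) \<Longrightarrow> \<bar>f x\<bar> \<le> B"
    and f_differences: "\<And>i x y. i \<in> I \<Longrightarrow> x \<in> space (PiM I (\<lambda>_. M)) \<Longrightarrow> y \<in> space M \<Longrightarrow>
      \<bar>f (x(i := y)) - f x\<bar> \<le> c"

lemma fun_upd_in_space_PiM: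
  "x \<in> space (PiM I (\<lambda>_. M)) \<Longrightarrow> y \<in> space M \<Longrightarrow> x(i := y) \<in> space (PiM (insert i I) (\<lambda>_. M))"
  by (auto simp: space_PiM PiE_iff extensional_def)

context
  fixes M :: "'a measure" and I :: "'i set" and i :: 'i and f :: "('i \<Rightarrow> 'a) \<Rightarrow> real" and B c :: real
  assumes bd: "bounded_differences M (insert i I) f B c" and i: "i \<notin> I"
begin

interpretation bounded_differences M "insert i I" f B c by (rule bd)

lemma measurable_integral_coordinate:
  "(\<lambda>x. \<integral>y. f (x(i := y)) \<partial>M) \<in> borel_measurable (PiM I (\<lambda>_. M))"
proof -
  have "(\<lambda>(x, y). x(i := y)) \<in> measurable (PiM I (\<lambda>_. M) \<Otimes>\<^sub>M M) (PiM (insert i I) (\<lambda>_. M))"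
    using measurable_fun_upd[where I="insert i I" and J=I and i=i and M="\<lambda>_. M"
        and f=fst and h=snd and N="PiM I (\<lambda>_. M) \<Otimes>\<^sub>M M"]
    by (simp add: split_beta')
  from measurable_compose[OF this f_measurable]
  have [measurable]: "(\<lambda>(x, y). f (x(i := y))) \<in> borel_measurable (PiM I (\<lambda>_. M) \<Otimes>\<^sub>M M)"
    by (simp add: split_beta')
  show ?thesis by measurable
qed

lemma measurable_fun_upd_coordinate:
  "x \<in> space (PiM I (\<lambda>_. M)) \<Longrightarrow> (\<lambda>y. f (x(i := y))) \<in> borel_measurable M"
  using measurable_comp[OF measurable_component_update[OF _ i] f_measurable]
  by (simp add: comp_def)

lemma integrable_fun_upd_coordinate:
  assumes x: "x \<in> space (PiM I (\<lambda>_. M))"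
  shows "integrable M (\<lambda>y. f (x(i := y)))"
  using f_bounded[OF fun_upd_in_space_PiM[OF x]]
  by (intro integrable_const_bound[where B=B] AE_I2 measurable_fun_upd_coordinate[OF x]) auto

lemma bounded_differences_integral_coordinate:
  "bounded_differences M I (\<lambda>x. \<integral>y. f (x(i := y)) \<partial>M) B c"
proof
  show "(\<lambda>x. \<integral>y. f (x(i := y)) \<partial>M) \<in> borel_measurable (PiM I (\<lambda>_. M))"
    by (rule measurable_integral_coordinate)
next
  fix x assume x: "x \<in> space (PiM I (\<lambda>_. M))"
  have "\<bar>\<integral>y. f (x(i := y)) \<partial>M\<bar> \<le> (\<integral>y. B \<partial>M)"
    using f_bounded fun_upd_in_space_PiM[OF x] integrable_fun_upd_coordinate[OF x]
    by (intro integral_abs_bound[THEN order_trans] integral_mono) auto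
  then show "\<bar>\<integral>y. f (x(i := y)) \<partial>M\<bar> \<le> B" by (simp add: prob_space)
next
  fix j x z assume j: "j \<in> I" and x: "x \<in> space (PiM I (\<lambda>_. M))" and z: "z \<in> space M"
  have xj: "x(j := z) \<in> space (PiM I (\<lambda>_. M))"
    using fun_upd_in_space_PiM[OF x z, of j] j by (simp add: insert_absorb)
  have "i \<noteq> j" using i j by auto
  then have "\<bar>f (x(j := z, i := y)) - f (x(i := y))\<bar> \<le> c" if y: "y \<in> space M" for y
    using f_differences[of j "x(i := y)" z] fun_upd_in_space_PiM[OF x y] j z
    by (simp add: fun_upd_twist)
  moreover note int = integrable_fun_upd_coordinate[OF xj] integrable_fun_upd_coordinate[OF x]
  ultimately have "\<bar>\<integral>y. f (x(j := z, i := y)) - f (x(i := y)) \<partial>M\<bar> \<le> (\<integral>y. c \<partial>M)"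
    by (intro integral_abs_bound[THEN order_trans] integral_mono) auto
  then show "\<bar>(\<integral>y. f ((x(j := z))(i := y)) \<partial>M) - (\<integral>y. f (x(i := y)) \<partial>M)\<bar> \<le> c"
    using int by (simp add: prob_space)
qed

lemma nn_integral_exp_coordinate_le:
  assumes x: "x \<in> space (PiM I (\<lambda>_. M))" and l: "l > 0"
  shows "(\<integral>\<^sup>+y. ennreal (exp (l * (f (x(i := y)) - (\<integral>y. f (x(i := y)) \<partial>M)))) \<partial>M)
    \<le> ennreal (exp (l\<^sup>2 * c\<^sup>2 / 8))"
proof (rule Hoeffdings_lemma_bounded_oscillation[OF measurable_fun_upd_coordinate[OF x] l])
  fix y y' assume y: "y \<in> space M" and y': "y' \<in> space M"
  show "f (x(i := y')) - f (x(i := y)) \<le> c"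
    using f_differences[of i "x(i := y)" y'] fun_upd_in_space_PiM[OF x y] y' by simp
qed

lemma nn_integral_exp_insert_le:
  assumes I: "finite I" and l: "l > 0"
  shows "(\<integral>\<^sup>+x. ennreal (exp (l * (f x - (\<integral>x. f x \<partial>PiM (insert i I) (\<lambda>_. M)))))
      \<partial>PiM (insert i I) (\<lambda>_. M))
    \<le> (\<integral>\<^sup>+x. ennreal (exp (l * ((\<integral>y. f (x(i := y)) \<partial>M)
        - (\<integral>x. (\<integral>y. f (x(i := y)) \<partial>M) \<partial>PiM I (\<lambda>_. M))))) \<partial>PiM I (\<lambda>_. M))
      * ennreal (exp (l\<^sup>2 * c\<^sup>2 / 8))"
proof -
  interpret product_prob_space "\<lambda>_. M" I by unfold_locales
  interpret PI: prob_space "PiM (insert i I) (\<lambda>_. M)"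
    using bd by (intro prob_space_PiM) (simp add: bounded_differences_def)
  let ?MI = "PiM I (\<lambda>_. M)"
  define g where "g x = (\<integral>y. f (x(i := y)) \<partial>M)" for x
  have [measurable]: "g \<in> borel_measurable ?MI"
    unfolding g_def[abs_def] by (rule measurable_integral_coordinate)
  have "integrable (PiM (insert i I) (\<lambda>_. M)) f"
    using f_bounded by (intro PI.integrable_const_bound[where B=B] AE_I2) auto
  then have Ef: "(\<integral>x. f x \<partial>PiM (insert i I) (\<lambda>_. M)) = (\<integral>x. g x \<partial>?MI)"
    unfolding g_def by (rule product_integral_insert[OF I i])
  have "(\<integral>\<^sup>+x. ennreal (exp (l * (f x - (\<integral>x. f x \<partial>PiM (insert i I) (\<lambda>_. M))))) \<partial>PiM (insert i I) (\<lambda>_. M))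
      = (\<integral>\<^sup>+x. (\<integral>\<^sup>+y. ennreal (exp (l * (f (x(i := y)) - (\<integral>x. g x \<partial>?MI)))) \<partial>M) \<partial>?MI)"
    unfolding Ef by (rule product_nn_integral_insert[OF I i]) measurable
  also have "\<dots> = (\<integral>\<^sup>+x. ennreal (exp (l * (g x - (\<integral>x. g x \<partial>?MI)))) *
      (\<integral>\<^sup>+y. ennreal (exp (l * (f (x(i := y)) - g x))) \<partial>M) \<partial>?MI)"
  proof (rule nn_integral_cong)
    fix x assume x: "x \<in> space ?MI"
    have "(\<integral>\<^sup>+y. ennreal (exp (l * (f (x(i := y)) - (\<integral>x. g x \<partial>?MI)))) \<partial>M)
        = (\<integral>\<^sup>+y. ennreal (exp (l * (g x - (\<integral>x. g x \<partial>?MI)))) * ennreal (exp (l * (f (x(i := y)) - g x))) \<partial>M)"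
      by (intro nn_integral_cong) (simp add: ennreal_mult[symmetric] exp_add[symmetric] algebra_simps)
    also have "\<dots> = ennreal (exp (l * (g x - (\<integral>x. g x \<partial>?MI))))
        * (\<integral>\<^sup>+y. ennreal (exp (l * (f (x(i := y)) - g x))) \<partial>M)"
      by (rule nn_integral_cmult) (use measurable_fun_upd_coordinate[OF x] in measurable)
    finally show "(\<integral>\<^sup>+y. ennreal (exp (l * (f (x(i := y)) - (\<integral>x. g x \<partial>?MI)))) \<partial>M) = \<dots>" .
  qed
  also have "\<dots> \<le> (\<integral>\<^sup>+x. ennreal (exp (l * (g x - (\<integral>x. g x \<partial>?MI)))) * ennreal (exp (l\<^sup>2 * c\<^sup>2 / 8)) \<partial>?MI)"
    by (intro nn_integral_mono mult_left_mono nn_integral_exp_coordinate_le[OF _ l, folded g_def]) simp_all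
  also have "\<dots> = (\<integral>\<^sup>+x. ennreal (exp (l * (g x - (\<integral>x. g x \<partial>?MI)))) \<partial>?MI) * ennreal (exp (l\<^sup>2 * c\<^sup>2 / 8))"
    by (rule nn_integral_multc) measurable
  finally show ?thesis unfolding g_def .
qed

end

lemma mcdiarmid_mgf:
  assumes "bounded_differences M I f B c" and "finite I" and l: "l > 0"
  shows "(\<integral>\<^sup>+x. ennreal (exp (l * (f x - (\<integral>x. f x \<partial>PiM I (\<lambda>_. M))))) \<partial>PiM I (\<lambda>_. M))
    \<le> ennreal (exp (l\<^sup>2 * real (card I) * c\<^sup>2 / 8))"
  using \<open>finite I\<close> assms(1)
proof (induction I arbitrary: f B rule: finite_induct)
  case empty
  then show ?case
    by (simp add: PiM_empty lebesgue_integral_count_space_finite nn_integral_count_space_finite)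
next
  case (insert i I)
  have "(\<integral>\<^sup>+x. ennreal (exp (l * (f x - (\<integral>x. f x \<partial>PiM (insert i I) (\<lambda>_. M)))))
      \<partial>PiM (insert i I) (\<lambda>_. M))
    \<le> (\<integral>\<^sup>+x. ennreal (exp (l * ((\<integral>y. f (x(i := y)) \<partial>M)
        - (\<integral>x. (\<integral>y. f (x(i := y)) \<partial>M) \<partial>PiM I (\<lambda>_. M))))) \<partial>PiM I (\<lambda>_. M))
      * ennreal (exp (l\<^sup>2 * c\<^sup>2 / 8))"
    by (rule nn_integral_exp_insert_le[OF insert.prems insert.hyps(2,1) l])
  also have "\<dots> \<le> ennreal (exp (l\<^sup>2 * real (card I) * c\<^sup>2 / 8)) * ennreal (exp (l\<^sup>2 * c\<^sup>2 / 8))"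
    using insert.IH[OF bounded_differences_integral_coordinate[OF insert.prems insert.hyps(2)]]
    by (rule mult_right_mono) simp
  also have "\<dots> = ennreal (exp (l\<^sup>2 * real (card (insert i I)) * c\<^sup>2 / 8))"
    using insert.hyps by (simp add: ennreal_mult[symmetric] exp_add[symmetric] algebra_simps add_divide_distrib)
  finally show ?case .
qed

lemma (in bounded_differences) mcdiarmid_inequality:
  assumes I: "finite I" "I \<noteq> {}" and c: "c > 0" and t: "t > 0"
  shows "measure (PiM I (\<lambda>_. M)) {x \<in> space (PiM I (\<lambda>_. M)). f x \<ge> (\<integral>x. f x \<partial>PiM I (\<lambda>_. M)) + t}
    \<le> exp (- 2 * t\<^sup>2 / (real (card I) * c\<^sup>2))"
proof -
  let ?P = "PiM I (\<lambda>_. M)"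
  interpret P: prob_space ?P by (rule prob_space_PiM) (rule prob_space_axioms)
  define E where "E = (\<integral>x. f x \<partial>?P)"
  define n where "n = real (card I)"
  have n: "n > 0" using I by (simp add: n_def card_gt_0_iff)
  \<comment> \<open>the optimal parameter in the Chernoff bound\<close>
  define l where "l = 4 * t / (n * c\<^sup>2)"
  have l: "l > 0" using n c t by (simp add: l_def)
  let ?A = "{x \<in> space ?P. f x \<ge> E + t}"
  have "emeasure ?P ?A = (\<integral>\<^sup>+x. indicator ?A x \<partial>?P)"
    by (rule nn_integral_indicator[symmetric]) measurable
  also have "\<dots> \<le> (\<integral>\<^sup>+x. ennreal (exp (- l * t)) * ennreal (exp (l * (f x - E))) \<partial>?P)"
  proof (rule nn_integral_mono)
    fix x
    have "x \<in> ?A \<Longrightarrow> 1 \<le> exp (- l * t) * exp (l * (f x - E))"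
      using l by (simp add: exp_add[symmetric] mult_left_mono)
    then show "indicator ?A x \<le> ennreal (exp (- l * t)) * ennreal (exp (l * (f x - E)))"
      by (auto simp: indicator_def ennreal_mult[symmetric])
  qed
  also have "\<dots> = ennreal (exp (- l * t)) * (\<integral>\<^sup>+x. ennreal (exp (l * (f x - E))) \<partial>?P)"
    by (rule nn_integral_cmult) measurable
  also have "\<dots> \<le> ennreal (exp (- l * t)) * ennreal (exp (l\<^sup>2 * n * c\<^sup>2 / 8))"
    unfolding E_def n_def
    by (intro mult_left_mono mcdiarmid_mgf[OF bounded_differences_axioms I(1) l]) simp
  also have "- l * t + l\<^sup>2 * n * c\<^sup>2 / 8 = - 2 * t\<^sup>2 / (n * c\<^sup>2)"
    using n c by (simp add: l_def field_simps power2_eq_square)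
  then have "ennreal (exp (- l * t)) * ennreal (exp (l\<^sup>2 * n * c\<^sup>2 / 8)) = ennreal (exp (- 2 * t\<^sup>2 / (n * c\<^sup>2)))"
    by (simp add: ennreal_mult[symmetric] exp_add[symmetric])
  finally show ?thesis
    by (simp add: E_def n_def P.emeasure_eq_measure)
qed

section \<open>Relative entropy of Gaussian mixtures\<close>

lemma mult_ln_divide_bounds:
  fixes a b :: real
  assumes a: "a > 0" and b: "b > 0"
  shows "a - b \<le> a * ln (a / b)" and "a * ln (a / b) \<le> (b - a)\<^sup>2 / b + a - b"
proof -
  have "ln (b / a) \<le> b / a - 1" using a b by (intro ln_le_minus_one) simp
  then have "a * (1 - b / a) \<le> a * ln (a / b)"
    using a b by (intro mult_left_mono) (auto simp: ln_div)
  then show "a - b \<le> a * ln (a / b)" using a by (simp add: algebra_simps)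
  have "ln (a / b) \<le> a / b - 1" using a b by (intro ln_le_minus_one) simp
  then have "a * ln (a / b) \<le> a * (a / b - 1)" using a by (intro mult_left_mono) auto
  also have "\<dots> = (b - a)\<^sup>2 / b + a - b"
    using b by (simp add: field_simps power2_eq_square)
  finally show "a * ln (a / b) \<le> (b - a)\<^sup>2 / b + a - b" .
qed

text \<open>Integrate \<open>p ln (p / q) \<le> (q - p)\<^sup>2 / q + p - q\<close>; the last two terms cancel since \<open>p\<close> and \<open>q\<close>
  have the same mass.\<close>
lemma integral_mult_ln_divide_le_weighted_L2:
  fixes p q w :: "'a \<Rightarrow> real"
  assumes [measurable]: "p \<in> borel_measurable M" "q \<in> borel_measurable M" "w \<in> borel_measurable M"
    and p: "\<And>z. p z > 0" and q: "\<And>z. q z > 0" and w: "\<And>z. 1 / q z \<le> w z"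
    and int: "integrable M p" "integrable M q" "(\<integral>z. p z \<partial>M) = (\<integral>z. q z \<partial>M)"
    and fin: "(\<integral>\<^sup>+z. ennreal ((q z - p z)\<^sup>2 * w z) \<partial>M) < \<infinity>"
  shows "integrable M (\<lambda>z. p z * ln (p z / q z))"
    and "(\<integral>z. p z * ln (p z / q z) \<partial>M) \<le> enn2real (\<integral>\<^sup>+z. ennreal ((q z - p z)\<^sup>2 * w z) \<partial>M)"
proof -
  have w_pos: "w z > 0" for z
    using q[of z] w[of z] by (meson divide_pos_pos less_le_trans zero_less_one)
  have nonneg: "0 \<le> (q z - p z)\<^sup>2 * w z" for z
    using w_pos[of z] by simp
  have int_D: "integrable M (\<lambda>z. (q z - p z)\<^sup>2 * w z)"
    using fin nonneg by (intro integrableI_nonneg) auto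
  have lower: "p z - q z \<le> p z * ln (p z / q z)"
    and upper: "p z * ln (p z / q z) \<le> (q z - p z)\<^sup>2 * w z + p z - q z" for z
  proof -
    show "p z - q z \<le> p z * ln (p z / q z)" by (rule mult_ln_divide_bounds(1)[OF p[of z] q[of z]])
    have "(q z - p z)\<^sup>2 / q z \<le> (q z - p z)\<^sup>2 * w z"
      using w[of z] by (simp add: divide_inverse mult_left_mono)
    then show "p z * ln (p z / q z) \<le> (q z - p z)\<^sup>2 * w z + p z - q z"
      using mult_ln_divide_bounds(2)[OF p[of z] q[of z]] by simp
  qed
  show int_H: "integrable M (\<lambda>z. p z * ln (p z / q z))"
  proof (rule Bochner_Integration.integrable_bound)
    show "integrable M (\<lambda>z. (q z - p z)\<^sup>2 * w z + p z + q z)"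
      using int_D int by auto
    have "norm (p z * ln (p z / q z)) \<le> norm ((q z - p z)\<^sup>2 * w z + p z + q z)" for z
      using lower[of z] upper[of z] nonneg[of z] p[of z] q[of z] by (simp add: abs_le_iff)
    then show "AE z in M. norm (p z * ln (p z / q z)) \<le> norm ((q z - p z)\<^sup>2 * w z + p z + q z)"
      by simp
  qed measurable
  have "(\<integral>z. p z * ln (p z / q z) \<partial>M) \<le> (\<integral>z. (q z - p z)\<^sup>2 * w z + p z - q z \<partial>M)"
    using int_H int_D int upper by (intro integral_mono) auto
  also have "\<dots> = (\<integral>z. (q z - p z)\<^sup>2 * w z \<partial>M)"
    using int_D int by simp
  also have "\<dots> = enn2real (\<integral>\<^sup>+z. ennreal ((q z - p z)\<^sup>2 * w z) \<partial>M)"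
    using nonneg by (intro integral_eq_nn_integral AE_I2) auto
  finally show "(\<integral>z. p z * ln (p z / q z) \<partial>M) \<le> enn2real (\<integral>\<^sup>+z. ennreal ((q z - p z)\<^sup>2 * w z) \<partial>M)" .
qed

definition gauss_mixture :: "real \<Rightarrow> 'a::euclidean_space measure \<Rightarrow> 'a \<Rightarrow> real" where
  "gauss_mixture s \<nu> z = (\<integral>y. gauss_kernel s (z - y) \<partial>\<nu>)"

locale ball_mixture =
  fixes s r :: real and \<nu> :: "'a::euclidean_space measure"
  assumes s_pos: "s > 0" and prob: "prob_space \<nu>" and sets_eq: "sets \<nu> = sets borel"
    and AE_in_ball: "AE y in \<nu>. norm y \<le> r"
begin

interpretation prob_space \<nu> by (rule prob)

lemma space_eq: "space \<nu> = UNIV"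
  using sets_eq_imp_space_eq[OF sets_eq] by simp

lemma measurable_eq: "measurable \<nu> = measurable borel"
  by (intro ext measurable_cong_sets) (simp_all add: sets_eq)

lemma measurable_pair_eq: "measurable (lborel \<Otimes>\<^sub>M \<nu>) = measurable (borel \<Otimes>\<^sub>M borel)"
  by (intro ext measurable_cong_sets sets_pair_measure_cong) (simp_all add: sets_eq)

lemma radius_nonneg: "r \<ge> 0"
proof -
  have "AE y in \<nu>. 0 \<le> r"
    using AE_in_ball by (rule eventually_mono) (rule order_trans[OF norm_ge_zero])
  then show ?thesis by simp
qed

lemma integrable_gauss_kernel: "integrable \<nu> (\<lambda>y. gauss_kernel s (z - y))"
proof -
  have "norm (gauss_kernel s (z - y)) \<le> (2 * pi * s\<^sup>2) powr (- real DIM('a) / 2)" for y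
    using gauss_kernel_le[of s "z - y"] gauss_kernel_pos[OF s_pos, of "z - y"] by simp
  then show ?thesis
    by (intro integrable_const_bound[where B="(2 * pi * s\<^sup>2) powr (- real DIM('a) / 2)"] AE_I2)
       (simp_all add: measurable_eq)
qed

lemma integrable_gauss_kernel_sq: "integrable \<nu> (\<lambda>v. (gauss_kernel s (z - v))\<^sup>2)"
proof -
  have "norm ((gauss_kernel s (z - v))\<^sup>2) \<le> ((2 * pi * s\<^sup>2) powr (- real DIM('a) / 2))\<^sup>2" for v
    using gauss_kernel_le[of s "z - v"] gauss_kernel_pos[OF s_pos, of "z - v"]
    by (simp add: power_mono)
  then show ?thesis
    by (intro integrable_const_bound[where B="((2 * pi * s\<^sup>2) powr (- real DIM('a) / 2))\<^sup>2"] AE_I2)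
       (simp_all add: measurable_eq)
qed

lemma gauss_mixture_measurable [measurable]: "gauss_mixture s \<nu> \<in> borel_measurable borel"
proof -
  have "(\<lambda>z. \<integral>y. gauss_kernel s (z - y) \<partial>\<nu>) \<in> borel_measurable lborel"
    by (rule borel_measurable_lebesgue_integral) (unfold measurable_pair_eq, measurable)
  then show ?thesis unfolding gauss_mixture_def[abs_def] by simp
qed

lemma ennreal_gauss_mixture:
  "ennreal (gauss_mixture s \<nu> z) = (\<integral>\<^sup>+y. ennreal (gauss_kernel s (z - y)) \<partial>\<nu>)"
  unfolding gauss_mixture_def
  using integrable_gauss_kernel gauss_kernel_pos[OF s_pos]
  by (intro nn_integral_eq_integral[symmetric]) (auto intro: less_imp_le)

lemma inverse_gauss_weight_le_gauss_mixture: "1 / gauss_weight s r z \<le> gauss_mixture s \<nu> z"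
proof -
  have "(\<integral>y. 1 / gauss_weight s r z \<partial>\<nu>) \<le> gauss_mixture s \<nu> z"
    unfolding gauss_mixture_def using AE_in_ball
    by (intro integral_mono_AE integrable_gauss_kernel)
       (auto intro: inverse_gauss_weight_le_gauss_kernel[OF s_pos] eventually_mono)
  then show ?thesis by (simp add: prob_space)
qed

lemma gauss_mixture_pos: "gauss_mixture s \<nu> z > 0"
proof -
  have "0 < 1 / gauss_weight s r z" using gauss_weight_pos[OF s_pos] by simp
  then show ?thesis using inverse_gauss_weight_le_gauss_mixture by (rule less_le_trans)
qed

lemma gauss_mixture_le: "gauss_mixture s \<nu> z \<le> (2 * pi * s\<^sup>2) powr (- real DIM('a) / 2)"
proof -
  have "gauss_mixture s \<nu> z \<le> (\<integral>y. (2 * pi * s\<^sup>2) powr (- real DIM('a) / 2) \<partial>\<nu>)"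
    unfolding gauss_mixture_def by (intro integral_mono integrable_gauss_kernel gauss_kernel_le) simp
  then show ?thesis by (simp add: prob_space)
qed

lemma nn_integral_gauss_mixture: "(\<integral>\<^sup>+z. ennreal (gauss_mixture s \<nu> z) \<partial>lborel) = 1"
proof -
  interpret pair_sigma_finite lborel \<nu> by unfold_locales
  have "(\<integral>\<^sup>+z. ennreal (gauss_mixture s \<nu> z) \<partial>lborel)
      = (\<integral>\<^sup>+y. (\<integral>\<^sup>+z. ennreal (gauss_kernel s (z - y)) \<partial>lborel) \<partial>\<nu>)"
    unfolding ennreal_gauss_mixture
    by (rule Fubini'[symmetric]) (unfold measurable_pair_eq, measurable)
  also have "\<dots> = 1"
    by (simp add: nn_integral_gauss_kernel[OF s_pos] emeasure_space_1)
  finally show ?thesis .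
qed

lemma integrable_gauss_mixture: "integrable lborel (gauss_mixture s \<nu>)"
  using nn_integral_gauss_mixture gauss_mixture_pos
  by (intro integrableI_nonneg AE_I2) (auto intro: less_imp_le)

lemma integral_gauss_mixture: "(\<integral>z. gauss_mixture s \<nu> z \<partial>lborel) = 1"
  using nn_integral_gauss_mixture gauss_mixture_pos
  by (subst integral_eq_nn_integral) (auto intro!: AE_I2 less_imp_le)

lemma nn_integral_nn_integral_gauss_kernel_sq_weight_le:
  "(\<integral>\<^sup>+z. (\<integral>\<^sup>+y. ennreal ((gauss_kernel s (z - y))\<^sup>2 * gauss_weight s r z) \<partial>\<nu>) \<partial>lborel)
    \<le> ennreal (weighted_kernel_bound s r TYPE('a))"
proof -
  interpret pair_sigma_finite lborel \<nu> by unfold_locales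
  have "(\<integral>\<^sup>+z. (\<integral>\<^sup>+y. ennreal ((gauss_kernel s (z - y))\<^sup>2 * gauss_weight s r z) \<partial>\<nu>) \<partial>lborel)
      = (\<integral>\<^sup>+y. (\<integral>\<^sup>+z. ennreal ((gauss_kernel s (z - y))\<^sup>2 * gauss_weight s r z) \<partial>lborel) \<partial>\<nu>)"
    by (rule Fubini'[symmetric]) (unfold measurable_pair_eq, measurable)
  also have "\<dots> \<le> (\<integral>\<^sup>+y. ennreal (weighted_kernel_bound s r TYPE('a)) \<partial>\<nu>)"
    using AE_in_ball
    by (intro nn_integral_mono_AE) (auto intro: nn_integral_gauss_kernel_sq_weight_le[OF s_pos] eventually_mono)
  also have "\<dots> = ennreal (weighted_kernel_bound s r TYPE('a))" by (simp add: emeasure_space_1)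
  finally show ?thesis .
qed

text \<open>By Cauchy-Schwarz, \<open>(gauss_mixture s \<nu> z)\<^sup>2 \<le> \<integral>y. (gauss_kernel s (z - y))\<^sup>2 \<partial>\<nu>\<close>.\<close>
lemma nn_integral_gauss_mixture_sq_weight_le:
  "(\<integral>\<^sup>+z. ennreal ((gauss_mixture s \<nu> z)\<^sup>2 * gauss_weight s r z) \<partial>lborel)
    \<le> ennreal (weighted_kernel_bound s r TYPE('a))"
proof -
  have "(\<integral>\<^sup>+z. ennreal ((gauss_mixture s \<nu> z)\<^sup>2 * gauss_weight s r z) \<partial>lborel)
      \<le> (\<integral>\<^sup>+z. (\<integral>\<^sup>+y. ennreal ((gauss_kernel s (z - y))\<^sup>2 * gauss_weight s r z) \<partial>\<nu>) \<partial>lborel)"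
  proof (rule nn_integral_mono)
    fix z :: 'a
    have w: "gauss_weight s r z > 0" by (rule gauss_weight_pos[OF s_pos])
    have "(\<integral>\<^sup>+y. ennreal (gauss_kernel s (z - y)) * 1 \<partial>\<nu>)\<^sup>2
        \<le> (\<integral>\<^sup>+y. ennreal (gauss_kernel s (z - y)) ^ 2 \<partial>\<nu>) * (\<integral>\<^sup>+y. 1 ^ 2 \<partial>\<nu>)"
      by (rule Cauchy_Schwarz_nn_integral) (simp_all add: measurable_eq)
    then have "(ennreal (gauss_mixture s \<nu> z))\<^sup>2 \<le> (\<integral>\<^sup>+y. ennreal ((gauss_kernel s (z - y))\<^sup>2) \<partial>\<nu>)"
      by (simp add: ennreal_gauss_mixture emeasure_space_1 ennreal_power gauss_kernel_pos[OF s_pos] less_imp_le)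
    then have "(ennreal (gauss_mixture s \<nu> z))\<^sup>2 * ennreal (gauss_weight s r z)
        \<le> (\<integral>\<^sup>+y. ennreal ((gauss_kernel s (z - y))\<^sup>2) \<partial>\<nu>) * ennreal (gauss_weight s r z)"
      by (rule mult_right_mono) simp
    also have "\<dots> = (\<integral>\<^sup>+y. ennreal ((gauss_kernel s (z - y))\<^sup>2 * gauss_weight s r z) \<partial>\<nu>)"
      using w by (subst nn_integral_multc[symmetric]) (simp_all add: measurable_eq ennreal_mult)
    also have "(ennreal (gauss_mixture s \<nu> z))\<^sup>2 * ennreal (gauss_weight s r z)
        = ennreal ((gauss_mixture s \<nu> z)\<^sup>2 * gauss_weight s r z)"
      using w gauss_mixture_pos[of z] by (simp add: ennreal_mult ennreal_power)
    finally show "ennreal ((gauss_mixture s \<nu> z)\<^sup>2 * gauss_weight s r z)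
        \<le> (\<integral>\<^sup>+y. ennreal ((gauss_kernel s (z - y))\<^sup>2 * gauss_weight s r z) \<partial>\<nu>)" .
  qed
  also have "\<dots> \<le> ennreal (weighted_kernel_bound s r TYPE('a))"
    by (rule nn_integral_nn_integral_gauss_kernel_sq_weight_le)
  finally show ?thesis .
qed

end

lemma nn_integral_gauss_mixture_diff_sq_weight_finite:
  assumes "ball_mixture s r \<nu>1" "ball_mixture s r \<nu>2"
  shows "(\<integral>\<^sup>+z. ennreal ((gauss_mixture s \<nu>2 z - gauss_mixture s \<nu>1 z)\<^sup>2 * gauss_weight s r z) \<partial>lborel) < \<infinity>"
proof -
  interpret A: ball_mixture s r \<nu>1 by fact
  interpret B: ball_mixture s r \<nu>2 by fact
  let ?p = "gauss_mixture s \<nu>1" and ?q = "gauss_mixture s \<nu>2" and ?w = "gauss_weight s r"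
  let ?K = "weighted_kernel_bound s r TYPE('a)"
  have "(\<integral>\<^sup>+z. ennreal ((?q z - ?p z)\<^sup>2 * ?w z) \<partial>lborel)
      \<le> (\<integral>\<^sup>+z. 2 * ennreal ((?q z)\<^sup>2 * ?w z) + 2 * ennreal ((?p z)\<^sup>2 * ?w z) \<partial>lborel)"
  proof (rule nn_integral_mono)
    fix z :: 'a
    have w: "?w z > 0" by (rule gauss_weight_pos[OF A.s_pos])
    have "(?q z - ?p z)\<^sup>2 \<le> 2 * (?q z)\<^sup>2 + 2 * (?p z)\<^sup>2"
      using sum_squares_ge_zero[of "?q z + ?p z" 0] by (simp add: power2_eq_square algebra_simps)
    then have "(?q z - ?p z)\<^sup>2 * ?w z \<le> (2 * (?q z)\<^sup>2 + 2 * (?p z)\<^sup>2) * ?w z"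
      using w by (intro mult_right_mono) auto
    then have "ennreal ((?q z - ?p z)\<^sup>2 * ?w z) \<le> ennreal (2 * ((?q z)\<^sup>2 * ?w z) + 2 * ((?p z)\<^sup>2 * ?w z))"
      by (intro ennreal_leI) (simp add: algebra_simps)
    also have "\<dots> = 2 * ennreal ((?q z)\<^sup>2 * ?w z) + 2 * ennreal ((?p z)\<^sup>2 * ?w z)"
      using w by (simp add: ennreal_plus ennreal_mult)
    finally show "ennreal ((?q z - ?p z)\<^sup>2 * ?w z) \<le> \<dots>" .
  qed
  also have "\<dots> = 2 * (\<integral>\<^sup>+z. ennreal ((?q z)\<^sup>2 * ?w z) \<partial>lborel) + 2 * (\<integral>\<^sup>+z. ennreal ((?p z)\<^sup>2 * ?w z) \<partial>lborel)"
    by (simp add: nn_integral_add nn_integral_cmult)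
  also have "\<dots> \<le> 2 * ennreal ?K + 2 * ennreal ?K"
    using A.nn_integral_gauss_mixture_sq_weight_le B.nn_integral_gauss_mixture_sq_weight_le
    by (intro add_mono mult_left_mono) auto
  also have "\<dots> < \<infinity>" by (simp add: ennreal_mult_less_top)
  finally show ?thesis .
qed

lemma gauss_mixture_KL_le_weighted_L2:
  assumes "ball_mixture s r \<nu>1" "ball_mixture s r \<nu>2"
  shows "integrable lborel (\<lambda>z. gauss_mixture s \<nu>1 z * ln (gauss_mixture s \<nu>1 z / gauss_mixture s \<nu>2 z))"
    and "(\<integral>z. gauss_mixture s \<nu>1 z * ln (gauss_mixture s \<nu>1 z / gauss_mixture s \<nu>2 z) \<partial>lborel)
      \<le> enn2real (\<integral>\<^sup>+z. ennreal ((gauss_mixture s \<nu>2 z - gauss_mixture s \<nu>1 z)\<^sup>2 * gauss_weight s r z) \<partial>lborel)"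
proof -
  interpret A: ball_mixture s r \<nu>1 by fact
  interpret B: ball_mixture s r \<nu>2 by fact
  note KL = integral_mult_ln_divide_le_weighted_L2[of "gauss_mixture s \<nu>1" lborel "gauss_mixture s \<nu>2"
      "gauss_weight s r", OF _ _ _ A.gauss_mixture_pos B.gauss_mixture_pos _
      A.integrable_gauss_mixture B.integrable_gauss_mixture _
      nn_integral_gauss_mixture_diff_sq_weight_finite[OF assms]]
  have "1 / gauss_mixture s \<nu>2 z \<le> gauss_weight s r z" for z
    using B.inverse_gauss_weight_le_gauss_mixture[of z] gauss_weight_pos[OF A.s_pos, of r z]
      B.gauss_mixture_pos[of z] by (simp add: field_simps)
  then show "integrable lborel (\<lambda>z. gauss_mixture s \<nu>1 z * ln (gauss_mixture s \<nu>1 z / gauss_mixture s \<nu>2 z))"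
    and "(\<integral>z. gauss_mixture s \<nu>1 z * ln (gauss_mixture s \<nu>1 z / gauss_mixture s \<nu>2 z) \<partial>lborel)
      \<le> enn2real (\<integral>\<^sup>+z. ennreal ((gauss_mixture s \<nu>2 z - gauss_mixture s \<nu>1 z)\<^sup>2 * gauss_weight s r z) \<partial>lborel)"
    using KL A.integral_gauss_mixture B.integral_gauss_mixture by simp_all
qed

definition empirical_measure :: "nat \<Rightarrow> (nat \<Rightarrow> 'a::euclidean_space) \<Rightarrow> 'a measure" where
  "empirical_measure N y = distr (measure_pmf (pmf_of_set {1..N})) borel y"

lemma gauss_mixture_empirical_measure:
  assumes N: "N \<ge> 1"
  shows "gauss_mixture s (empirical_measure N y) z = (1 / real N) * (\<Sum>i=1..N. gauss_kernel s (z - y i))"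
proof -
  have "gauss_mixture s (empirical_measure N y) z
      = (\<integral>i. gauss_kernel s (z - y i) \<partial>measure_pmf (pmf_of_set {1..N}))"
    unfolding gauss_mixture_def empirical_measure_def by (subst integral_distr) auto
  also have "\<dots> = (\<Sum>i=1..N. gauss_kernel s (z - y i)) / real N"
    using N by (subst integral_pmf_of_set) auto
  finally show ?thesis by simp
qed

lemma ball_mixture_empirical_measure:
  assumes s: "s > 0" and N: "N \<ge> 1" and y: "\<And>i. i \<in> {1..N} \<Longrightarrow> norm (y i) \<le> r"
  shows "ball_mixture s r (empirical_measure N y)"
proof (rule ball_mixture.intro)
  show "prob_space (empirical_measure N y)"
    unfolding empirical_measure_def
    by (rule prob_space.prob_space_distr) (auto simp: measure_pmf.prob_space_axioms)
  have "AE i in measure_pmf (pmf_of_set {1..N}). norm (y i) \<le> r"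
    using N y by (simp add: AE_measure_pmf_iff)
  then show "AE v in empirical_measure N y. norm v \<le> r"
    unfolding empirical_measure_def by (subst AE_distr_iff) auto
qed (auto simp: s empirical_measure_def)

section \<open>The weighted deviation of an empirical mixture\<close>

lemma integral_PiM_mult_centered_coordinates:
  fixes h :: "'a \<Rightarrow> real" and I :: "'i set"
  assumes M: "prob_space M" and I: "finite I" and ij: "i \<in> I" "j \<in> I"
    and [measurable]: "h \<in> borel_measurable M" and bnd: "\<And>y. y \<in> space M \<Longrightarrow> \<bar>h y\<bar> \<le> C"
    and centered: "(\<integral>y. h y \<partial>M) = 0"
  shows "integrable (PiM I (\<lambda>_. M)) (\<lambda>x. h (x i) * h (x j))"
    and "(\<integral>x. h (x i) * h (x j) \<partial>PiM I (\<lambda>_. M)) = (if i = j then (\<integral>y. (h y)\<^sup>2 \<partial>M) else 0)"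
proof -
  interpret M: prob_space M by (rule M)
  interpret product_prob_space "\<lambda>_. M" I by unfold_locales
  \<comment> \<open>\<open>h (x i) * h (x j)\<close> as a product over all coordinates, to which Fubini applies\<close>
  define factor :: "'i \<Rightarrow> 'a \<Rightarrow> real"
    where "factor k y = (if k = i then h y else 1) * (if k = j then h y else 1)" for k y
  have factor_int: "integrable M (factor k)" for k
  proof (rule M.integrable_const_bound[where B="(max C 1)\<^sup>2"])
    have "\<bar>factor k y\<bar> \<le> max C 1 * max C 1" if "y \<in> space M" for y
      unfolding factor_def abs_mult using bnd[OF that] by (intro mult_mono) auto
    then show "AE y in M. norm (factor k y) \<le> (max C 1)\<^sup>2"
      by (intro AE_I2) (simp add: power2_eq_square)
  qed (simp add: factor_def[abs_def])
  have prod_eq: "(\<lambda>x. h (x i) * h (x j)) = (\<lambda>x. \<Prod>k\<in>I. factor k (x k))"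
    using ij I by (simp add: factor_def prod.distrib)
  show "integrable (PiM I (\<lambda>_. M)) (\<lambda>x. h (x i) * h (x j))"
    unfolding prod_eq by (rule product_integrable_prod[OF I factor_int])
  have "(\<integral>x. h (x i) * h (x j) \<partial>PiM I (\<lambda>_. M)) = (\<Prod>k\<in>I. \<integral>y. factor k y \<partial>M)"
    unfolding prod_eq by (rule product_integral_prod[OF I factor_int])
  also have "\<dots> = (if i = j then (\<integral>y. (h y)\<^sup>2 \<partial>M) else 0)"
  proof (cases "i = j")
    case True
    then have "(\<integral>y. factor k y \<partial>M) = (if k = i then (\<integral>y. (h y)\<^sup>2 \<partial>M) else 1)" for k
      by (simp add: factor_def power2_eq_square M.prob_space)
    then show ?thesis using True ij I by simp
  next
    case False
    then have "(\<integral>y. factor i y \<partial>M) = 0" by (simp add: factor_def centered)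
    then have "(\<Prod>k\<in>I. \<integral>y. factor k y \<partial>M) = 0"
      using ij(1) I by (intro prod_zero bexI[of _ i])
    then show ?thesis using False by simp
  qed
  finally show "(\<integral>x. h (x i) * h (x j) \<partial>PiM I (\<lambda>_. M)) = (if i = j then (\<integral>y. (h y)\<^sup>2 \<partial>M) else 0)" .
qed

lemma integral_PiM_sum_centered_square:
  fixes h :: "'a \<Rightarrow> real" and I :: "'i set"
  assumes M: "prob_space M" and I: "finite I"
    and h: "h \<in> borel_measurable M" and bnd: "\<And>y. y \<in> space M \<Longrightarrow> \<bar>h y\<bar> \<le> C"
    and centered: "(\<integral>y. h y \<partial>M) = 0"
  shows "integrable (PiM I (\<lambda>_. M)) (\<lambda>x. (\<Sum>i\<in>I. h (x i))\<^sup>2)"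
    and "(\<integral>x. (\<Sum>i\<in>I. h (x i))\<^sup>2 \<partial>PiM I (\<lambda>_. M)) = real (card I) * (\<integral>y. (h y)\<^sup>2 \<partial>M)"
proof -
  note cross = integral_PiM_mult_centered_coordinates[OF M I _ _ h bnd centered]
  have sq: "(\<Sum>i\<in>I. h (x i))\<^sup>2 = (\<Sum>i\<in>I. \<Sum>j\<in>I. h (x i) * h (x j))" for x :: "'i \<Rightarrow> 'a"
    by (simp add: power2_eq_square sum_product)
  show "integrable (PiM I (\<lambda>_. M)) (\<lambda>x. (\<Sum>i\<in>I. h (x i))\<^sup>2)"
    unfolding sq by (intro Bochner_Integration.integrable_sum cross(1))
  have "(\<integral>x. (\<Sum>i\<in>I. h (x i))\<^sup>2 \<partial>PiM I (\<lambda>_. M))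
      = (\<Sum>i\<in>I. \<Sum>j\<in>I. \<integral>x. h (x i) * h (x j) \<partial>PiM I (\<lambda>_. M))"
    unfolding sq using cross(1)
    by (simp add: Bochner_Integration.integral_sum Bochner_Integration.integrable_sum)
  also have "\<dots> = real (card I) * (\<integral>y. (h y)\<^sup>2 \<partial>M)"
    using I by (simp add: cross(2))
  finally show "(\<integral>x. (\<Sum>i\<in>I. h (x i))\<^sup>2 \<partial>PiM I (\<lambda>_. M)) = real (card I) * (\<integral>y. (h y)\<^sup>2 \<partial>M)" .
qed

text \<open>The sample points lie in the ball only almost surely, while McDiarmid's inequality needs
  bounded differences at every point of the product space; so the points are projected onto the ball.\<close>
definition clamp_ball :: "real \<Rightarrow> 'a::real_normed_vector \<Rightarrow> 'a" where
  "clamp_ball r v = (if norm v \<le> r then v else (r / norm v) *\<^sub>R v)"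

lemma norm_clamp_ball_le: "r \<ge> 0 \<Longrightarrow> norm (clamp_ball r v) \<le> r"
  by (auto simp: clamp_ball_def)

lemma clamp_ball_eq: "norm v \<le> r \<Longrightarrow> clamp_ball r v = v"
  by (simp add: clamp_ball_def)

lemma clamp_ball_measurable [measurable]:
  "clamp_ball r \<in> borel_measurable (borel :: 'a::euclidean_space measure)"
  unfolding clamp_ball_def[abs_def] by measurable

locale ball_mixture_sample = ball_mixture s R \<mu> for s R :: real and \<mu> :: "'a::euclidean_space measure" +
  fixes N :: nat
  assumes N_pos: "N \<ge> 1"
begin

definition sample_mixture :: "(nat \<Rightarrow> 'a) \<Rightarrow> 'a \<Rightarrow> real" where
  "sample_mixture x z = (1 / real N) * (\<Sum>i=1..N. gauss_kernel s (z - clamp_ball R (x i)))"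

definition weighted_deviation :: "(nat \<Rightarrow> 'a) \<Rightarrow> 'a \<Rightarrow> real" where
  "weighted_deviation x z = (sample_mixture x z - gauss_mixture s \<mu> z) * sqrt (gauss_weight s R z)"

definition deviation :: "(nat \<Rightarrow> 'a) \<Rightarrow> real" where
  "deviation x = L2_norm lborel (weighted_deviation x)"

lemma sample_mixture_measurable [measurable]: "sample_mixture x \<in> borel_measurable borel"
  unfolding sample_mixture_def[abs_def] by measurable

lemma weighted_deviation_measurable [measurable]: "weighted_deviation x \<in> borel_measurable borel"
  unfolding weighted_deviation_def[abs_def] by measurable

lemma power2_weighted_deviation:
  "(weighted_deviation x z)\<^sup>2 = (sample_mixture x z - gauss_mixture s \<mu> z)\<^sup>2 * gauss_weight s R z"
  using gauss_weight_pos[OF s_pos, of R z] by (simp add: weighted_deviation_def power_mult_distrib)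

lemma ball_mixture_clamped_sample: "ball_mixture s R (empirical_measure N (\<lambda>i. clamp_ball R (x i)))"
  using norm_clamp_ball_le[OF radius_nonneg] by (intro ball_mixture_empirical_measure s_pos N_pos)

lemma sample_mixture_eq_gauss_mixture:
  "sample_mixture x = gauss_mixture s (empirical_measure N (\<lambda>i. clamp_ball R (x i)))"
  by (simp add: sample_mixture_def gauss_mixture_empirical_measure[OF N_pos] fun_eq_iff)

lemma nn_integral_weighted_deviation_finite:
  "(\<integral>\<^sup>+z. ennreal ((weighted_deviation x z)\<^sup>2) \<partial>lborel) < \<infinity>"
  using nn_integral_gauss_mixture_diff_sq_weight_finite[OF ball_mixture_axioms ball_mixture_clamped_sample]
  by (simp add: power2_weighted_deviation sample_mixture_eq_gauss_mixture)

lemma deviation_nonneg: "deviation x \<ge> 0"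
  by (simp add: deviation_def L2_norm_nonneg)

lemma nn_integral_scaled_kernel_sq_weight_le:
  fixes a :: 'a
  assumes a: "norm a \<le> R"
  shows "(\<integral>\<^sup>+z. ennreal ((gauss_kernel s (z - a) / real N * sqrt (gauss_weight s R z))\<^sup>2) \<partial>lborel)
      \<le> ennreal (weighted_kernel_bound s R TYPE('a) / (real N)\<^sup>2)"
proof -
  have "(\<integral>\<^sup>+z. ennreal ((gauss_kernel s (z - a) / real N * sqrt (gauss_weight s R z))\<^sup>2) \<partial>lborel)
      = (\<integral>\<^sup>+z. ennreal ((gauss_kernel s (z - a))\<^sup>2 * gauss_weight s R z) * ennreal (1 / (real N)\<^sup>2) \<partial>lborel)"
  proof (rule nn_integral_cong)
    fix z
    have eq: "(gauss_kernel s (z - a) / real N * sqrt (gauss_weight s R z))\<^sup>2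
        = (gauss_kernel s (z - a))\<^sup>2 * gauss_weight s R z * (1 / (real N)\<^sup>2)"
      using gauss_weight_pos[OF s_pos, of R z] by (simp add: power_mult_distrib power_divide)
    show "ennreal ((gauss_kernel s (z - a) / real N * sqrt (gauss_weight s R z))\<^sup>2)
        = ennreal ((gauss_kernel s (z - a))\<^sup>2 * gauss_weight s R z) * ennreal (1 / (real N)\<^sup>2)"
      unfolding eq by (rule ennreal_mult'') simp
  qed
  also have "\<dots> = (\<integral>\<^sup>+z. ennreal ((gauss_kernel s (z - a))\<^sup>2 * gauss_weight s R z) \<partial>lborel)
      * ennreal (1 / (real N)\<^sup>2)"
    by (rule nn_integral_multc) measurable
  also have "\<dots> \<le> ennreal (weighted_kernel_bound s R TYPE('a)) * ennreal (1 / (real N)\<^sup>2)"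
    by (intro mult_right_mono nn_integral_gauss_kernel_sq_weight_le[OF s_pos a]) simp
  also have "\<dots> = ennreal (weighted_kernel_bound s R TYPE('a) / (real N)\<^sup>2)"
    by (subst ennreal_mult''[symmetric]) simp_all
  finally show ?thesis .
qed

lemma sample_mixture_fun_upd:
  assumes k: "k \<in> {1..N}"
  shows "sample_mixture (x(k := v)) z = sample_mixture x z
    + (gauss_kernel s (z - clamp_ball R v) - gauss_kernel s (z - clamp_ball R (x k))) / real N"
proof -
  let ?h = "\<lambda>u. gauss_kernel s (z - clamp_ball R u)"
  have "(\<Sum>i=1..N. ?h ((x(k := v)) i)) = ?h v + (\<Sum>i\<in>{1..N} - {k}. ?h ((x(k := v)) i))"
    using k by (subst sum.remove[of _ k]) auto
  also have "(\<Sum>i\<in>{1..N} - {k}. ?h ((x(k := v)) i)) = (\<Sum>i\<in>{1..N} - {k}. ?h (x i))"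
    by (intro sum.cong) auto
  also have "\<dots> = (\<Sum>i=1..N. ?h (x i)) - ?h (x k)"
    using k by (subst sum.remove[of "{1..N}" k]) auto
  finally show ?thesis
    unfolding sample_mixture_def using N_pos by (simp add: field_simps)
qed

lemma deviation_fun_upd_le:
  assumes k: "k \<in> {1..N}"
  shows "deviation (x(k := v)) \<le> deviation x + 2 * sqrt (weighted_kernel_bound s R TYPE('a)) / real N"
proof -
  let ?K = "weighted_kernel_bound s R TYPE('a)"
  define g :: "'a \<Rightarrow> 'a \<Rightarrow> real"
    where "g a z = gauss_kernel s (z - clamp_ball R a) / real N * sqrt (gauss_weight s R z)" for a z
  define d where "d z = g v z + - g (x k) z" for z
  have [measurable]: "g a \<in> borel_measurable borel" "d \<in> borel_measurable borel" for a
    unfolding g_def d_def by measurable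
  have K: "?K / (real N)\<^sup>2 \<ge> 0" by (simp add: less_imp_le[OF weighted_kernel_bound_pos])
  have g_bound: "(\<integral>\<^sup>+z. ennreal ((g a z)\<^sup>2) \<partial>lborel) \<le> ennreal (?K / (real N)\<^sup>2)" for a
    unfolding g_def by (rule nn_integral_scaled_kernel_sq_weight_le[OF norm_clamp_ball_le[OF radius_nonneg]])
  have g_fin: "(\<integral>\<^sup>+z. ennreal ((g a z)\<^sup>2) \<partial>lborel) < \<infinity>" for a
    using le_less_trans[OF g_bound ennreal_less_top] by simp
  have g_norm: "L2_norm lborel (g a) \<le> sqrt ?K / real N" for a
    using L2_norm_le_sqrt[OF g_bound K] by (simp add: real_sqrt_divide)
  have d_fin: "(\<integral>\<^sup>+z. ennreal ((d z)\<^sup>2) \<partial>lborel) < \<infinity>"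
    and "L2_norm lborel d \<le> L2_norm lborel (g v) + L2_norm lborel (\<lambda>z. - g (x k) z)"
    unfolding d_def using g_fin by (intro L2_norm_triangle; simp)+
  then have d_norm: "L2_norm lborel d \<le> 2 * (sqrt ?K / real N)"
    using g_norm[of v] g_norm[of "x k"] by (simp add: L2_norm_uminus)
  have upd: "weighted_deviation (x(k := v)) z = weighted_deviation x z + d z" for z
    unfolding weighted_deviation_def sample_mixture_fun_upd[OF k] d_def g_def
    using N_pos by (simp add: field_simps)
  have "deviation (x(k := v)) \<le> deviation x + L2_norm lborel d"
    unfolding deviation_def upd
    using nn_integral_weighted_deviation_finite d_fin by (intro L2_norm_triangle(2)) auto
  then show ?thesis using d_norm by simp
qed

lemma deviation_fun_upd:
  assumes k: "k \<in> {1..N}"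
  shows "\<bar>deviation (x(k := v)) - deviation x\<bar> \<le> 2 * sqrt (weighted_kernel_bound s R TYPE('a)) / real N"
  using deviation_fun_upd_le[OF k, of x v] deviation_fun_upd_le[OF k, of "x(k := v)" "x k"] by simp

lemma deviation_le: "deviation x \<le> 2 * sqrt (weighted_kernel_bound s R TYPE('a))"
proof -
  let ?K = "weighted_kernel_bound s R TYPE('a)"
  define a where "a z = sample_mixture x z * sqrt (gauss_weight s R z)" for z
  define b where "b z = - (gauss_mixture s \<mu> z * sqrt (gauss_weight s R z))" for z
  have [measurable]: "a \<in> borel_measurable borel" "b \<in> borel_measurable borel"
    unfolding a_def[abs_def] b_def[abs_def] by measurable
  interpret E: ball_mixture s R "empirical_measure N (\<lambda>i. clamp_ball R (x i))"
    by (rule ball_mixture_clamped_sample)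
  have K: "?K \<ge> 0" using less_imp_le[OF weighted_kernel_bound_pos] .
  have sq: "(c * sqrt (gauss_weight s R z))\<^sup>2 = c\<^sup>2 * gauss_weight s R z" for c z
    using gauss_weight_pos[OF s_pos, of R z] by (simp add: power_mult_distrib)
  have a: "(\<integral>\<^sup>+z. ennreal ((a z)\<^sup>2) \<partial>lborel) \<le> ennreal ?K"
    using E.nn_integral_gauss_mixture_sq_weight_le by (simp add: a_def sq sample_mixture_eq_gauss_mixture)
  have b: "(\<integral>\<^sup>+z. ennreal ((b z)\<^sup>2) \<partial>lborel) \<le> ennreal ?K"
    using nn_integral_gauss_mixture_sq_weight_le by (simp add: b_def sq)
  have "deviation x = L2_norm lborel (\<lambda>z. a z + b z)"
    unfolding deviation_def weighted_deviation_def a_def b_def by (simp add: algebra_simps)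
  also have "\<dots> \<le> L2_norm lborel a + L2_norm lborel b"
    using le_less_trans[OF a ennreal_less_top] le_less_trans[OF b ennreal_less_top]
    by (intro L2_norm_triangle(2)) auto
  also have "\<dots> \<le> sqrt ?K + sqrt ?K"
    using L2_norm_le_sqrt[OF a K] L2_norm_le_sqrt[OF b K] by simp
  finally show ?thesis by simp
qed

lemma weighted_deviation_pair_measurable:
  "(\<lambda>(x, z). ennreal ((weighted_deviation x z)\<^sup>2)) \<in> borel_measurable (PiM {1..N} (\<lambda>_. \<mu>) \<Otimes>\<^sub>M lborel)"
proof -
  have eq: "measurable (PiM {1..N} (\<lambda>_. \<mu>) \<Otimes>\<^sub>M lborel) = measurable (PiM {1..N} (\<lambda>_. borel) \<Otimes>\<^sub>M borel)"
    by (intro ext measurable_cong_sets sets_pair_measure_cong sets_PiM_cong) (simp_all add: sets_eq)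
  show ?thesis
    unfolding eq weighted_deviation_def sample_mixture_def by measurable
qed

lemma deviation_measurable [measurable]: "deviation \<in> borel_measurable (PiM {1..N} (\<lambda>_. \<mu>))"
proof -
  have "(\<lambda>x. \<integral>\<^sup>+z. ennreal ((weighted_deviation x z)\<^sup>2) \<partial>lborel) \<in> borel_measurable (PiM {1..N} (\<lambda>_. \<mu>))"
    using weighted_deviation_pair_measurable by (rule lborel.borel_measurable_nn_integral)
  then show ?thesis unfolding deviation_def[abs_def] L2_norm_def by measurable
qed

lemma bounded_differences_deviation:
  "bounded_differences \<mu> {1..N} deviation (2 * sqrt (weighted_kernel_bound s R TYPE('a)))
    (2 * sqrt (weighted_kernel_bound s R TYPE('a)) / real N)"
proof (intro bounded_differences.intro bounded_differences_axioms.intro)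
  show "prob_space \<mu>" by (rule prob)
  show "deviation \<in> borel_measurable (PiM {1..N} (\<lambda>_. \<mu>))" by (rule deviation_measurable)
  show "\<bar>deviation x\<bar> \<le> 2 * sqrt (weighted_kernel_bound s R TYPE('a))" for x
    using deviation_le[of x] deviation_nonneg[of x] by simp
  show "\<bar>deviation (x(i := y)) - deviation x\<bar> \<le> 2 * sqrt (weighted_kernel_bound s R TYPE('a)) / real N"
    if "i \<in> {1..N}" for i x y
    using deviation_fun_upd[OF that] .
qed

interpretation M: prob_space \<mu> by (rule prob)
interpretation PM: prob_space "PiM {1..N} (\<lambda>_. \<mu>)" by (rule prob_space_PiM) (rule prob)

definition centred_kernel :: "'a \<Rightarrow> 'a \<Rightarrow> real" where
  "centred_kernel z v = gauss_kernel s (z - clamp_ball R v) - gauss_mixture s \<mu> z"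

lemma centred_kernel_borel_measurable [measurable]: "centred_kernel z \<in> borel_measurable borel"
  unfolding centred_kernel_def[abs_def] by measurable

lemma centred_kernel_measurable [measurable]: "centred_kernel z \<in> borel_measurable \<mu>"
  unfolding measurable_eq by (rule centred_kernel_borel_measurable)

lemma abs_centred_kernel_le: "\<bar>centred_kernel z v\<bar> \<le> (2 * pi * s\<^sup>2) powr (- real DIM('a) / 2)"
  using gauss_kernel_pos[OF s_pos, of "z - clamp_ball R v"] gauss_kernel_le[of s "z - clamp_ball R v"]
    gauss_mixture_pos[of z] gauss_mixture_le[of z]
  unfolding centred_kernel_def by linarith

lemma AE_centred_kernel_eq: "AE v in \<mu>. centred_kernel z v = gauss_kernel s (z - v) - gauss_mixture s \<mu> z"
  using AE_in_ball by (rule eventually_mono) (simp add: centred_kernel_def clamp_ball_eq)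

lemma integral_centred_kernel: "(\<integral>v. centred_kernel z v \<partial>\<mu>) = 0"
proof -
  have "(\<integral>v. centred_kernel z v \<partial>\<mu>) = (\<integral>v. gauss_kernel s (z - v) - gauss_mixture s \<mu> z \<partial>\<mu>)"
    using AE_centred_kernel_eq[of z] by (intro integral_cong_AE) (simp_all add: measurable_eq)
  also have "\<dots> = 0"
    using integrable_gauss_kernel by (simp add: gauss_mixture_def M.prob_space)
  finally show ?thesis .
qed

lemma integral_centred_kernel_sq_le:
  "(\<integral>v. (centred_kernel z v)\<^sup>2 \<partial>\<mu>) \<le> (\<integral>v. (gauss_kernel s (z - v))\<^sup>2 \<partial>\<mu>)"
proof -
  let ?p = "gauss_mixture s \<mu> z"
  have diff_sq: "(a - b)\<^sup>2 = a\<^sup>2 - 2 * b * a + b\<^sup>2" for a b :: real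
    by (simp add: power2_eq_square algebra_simps)
  have "(\<integral>v. (centred_kernel z v)\<^sup>2 \<partial>\<mu>)
      = (\<integral>v. (gauss_kernel s (z - v))\<^sup>2 - 2 * ?p * gauss_kernel s (z - v) + ?p\<^sup>2 \<partial>\<mu>)"
    using AE_centred_kernel_eq[of z]
    by (intro integral_cong_AE) (auto simp: measurable_eq diff_sq elim!: eventually_mono)
  also have "\<dots> = (\<integral>v. (gauss_kernel s (z - v))\<^sup>2 \<partial>\<mu>) - ?p\<^sup>2"
    using integrable_gauss_kernel integrable_gauss_kernel_sq
    by (simp add: gauss_mixture_def M.prob_space power2_eq_square)
  finally show ?thesis by simp
qed

lemma sample_mixture_minus_gauss_mixture:
  "sample_mixture x z - gauss_mixture s \<mu> z = (\<Sum>i\<in>{1..N}. centred_kernel z (x i)) / real N"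
  using N_pos by (simp add: sample_mixture_def centred_kernel_def sum_subtractf field_simps)

lemma sample_mixture_variance:
  shows "integrable (PiM {1..N} (\<lambda>_. \<mu>)) (\<lambda>x. (sample_mixture x z - gauss_mixture s \<mu> z)\<^sup>2)"
    and "(\<integral>x. (sample_mixture x z - gauss_mixture s \<mu> z)\<^sup>2 \<partial>PiM {1..N} (\<lambda>_. \<mu>))
      \<le> (\<integral>v. (gauss_kernel s (z - v))\<^sup>2 \<partial>\<mu>) / real N"
proof -
  have N: "real N > 0" using N_pos by simp
  note var = integral_PiM_sum_centered_square[OF prob finite_atLeastAtMost[of 1 N]
      centred_kernel_measurable abs_centred_kernel_le integral_centred_kernel]
  have eq: "(sample_mixture x z - gauss_mixture s \<mu> z)\<^sup>2
      = (\<Sum>i\<in>{1..N}. centred_kernel z (x i))\<^sup>2 / (real N)\<^sup>2" for x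
    by (simp add: sample_mixture_minus_gauss_mixture power_divide)
  show "integrable (PiM {1..N} (\<lambda>_. \<mu>)) (\<lambda>x. (sample_mixture x z - gauss_mixture s \<mu> z)\<^sup>2)"
    unfolding eq using var(1) by (rule Bochner_Integration.integrable_divide)
  have "(\<integral>x. (sample_mixture x z - gauss_mixture s \<mu> z)\<^sup>2 \<partial>PiM {1..N} (\<lambda>_. \<mu>))
      = (\<integral>v. (centred_kernel z v)\<^sup>2 \<partial>\<mu>) / real N"
    unfolding eq using var(2) N by (simp add: power2_eq_square)
  also have "\<dots> \<le> (\<integral>v. (gauss_kernel s (z - v))\<^sup>2 \<partial>\<mu>) / real N"
    using integral_centred_kernel_sq_le N by (simp add: divide_right_mono)
  finally show "(\<integral>x. (sample_mixture x z - gauss_mixture s \<mu> z)\<^sup>2 \<partial>PiM {1..N} (\<lambda>_. \<mu>))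
      \<le> (\<integral>v. (gauss_kernel s (z - v))\<^sup>2 \<partial>\<mu>) / real N" .
qed

lemma nn_integral_weighted_deviation_sq_le:
  "(\<integral>\<^sup>+x. ennreal ((weighted_deviation x z)\<^sup>2) \<partial>PiM {1..N} (\<lambda>_. \<mu>))
    \<le> ennreal (1 / real N) * (\<integral>\<^sup>+v. ennreal ((gauss_kernel s (z - v))\<^sup>2 * gauss_weight s R z) \<partial>\<mu>)"
proof -
  let ?w = "gauss_weight s R z"
  have w: "?w > 0" by (rule gauss_weight_pos[OF s_pos])
  have "(\<integral>\<^sup>+x. ennreal ((weighted_deviation x z)\<^sup>2) \<partial>PiM {1..N} (\<lambda>_. \<mu>))
      = ennreal ((\<integral>x. (sample_mixture x z - gauss_mixture s \<mu> z)\<^sup>2 \<partial>PiM {1..N} (\<lambda>_. \<mu>)) * ?w)"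
    unfolding power2_weighted_deviation using sample_mixture_variance(1) w
    by (subst nn_integral_eq_integral) auto
  also have "\<dots> \<le> ennreal ((\<integral>v. (gauss_kernel s (z - v))\<^sup>2 \<partial>\<mu>) / real N * ?w)"
    using sample_mixture_variance(2) w by (intro ennreal_leI mult_right_mono) auto
  also have "\<dots> = ennreal (1 / real N) * ennreal (\<integral>v. (gauss_kernel s (z - v))\<^sup>2 * ?w \<partial>\<mu>)"
    using w by (simp add: ennreal_mult''[symmetric])
  also have "ennreal (\<integral>v. (gauss_kernel s (z - v))\<^sup>2 * ?w \<partial>\<mu>)
      = (\<integral>\<^sup>+v. ennreal ((gauss_kernel s (z - v))\<^sup>2 * ?w) \<partial>\<mu>)"
    using integrable_gauss_kernel_sq w by (subst nn_integral_eq_integral) auto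
  finally show ?thesis .
qed

lemma nn_integral_deviation_sq_le:
  "(\<integral>\<^sup>+x. ennreal ((deviation x)\<^sup>2) \<partial>PiM {1..N} (\<lambda>_. \<mu>))
    \<le> ennreal (weighted_kernel_bound s R TYPE('a) / real N)"
proof -
  interpret pair_sigma_finite "PiM {1..N} (\<lambda>_. \<mu>)" lborel by unfold_locales
  have "(\<integral>\<^sup>+x. ennreal ((deviation x)\<^sup>2) \<partial>PiM {1..N} (\<lambda>_. \<mu>))
      = (\<integral>\<^sup>+x. (\<integral>\<^sup>+z. ennreal ((weighted_deviation x z)\<^sup>2) \<partial>lborel) \<partial>PiM {1..N} (\<lambda>_. \<mu>))"
    using nn_integral_weighted_deviation_finite
    by (intro nn_integral_cong) (simp add: deviation_def L2_norm_power2 less_top)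
  also have "\<dots> = (\<integral>\<^sup>+z. (\<integral>\<^sup>+x. ennreal ((weighted_deviation x z)\<^sup>2) \<partial>PiM {1..N} (\<lambda>_. \<mu>)) \<partial>lborel)"
    by (rule Fubini'[symmetric]) (rule weighted_deviation_pair_measurable)
  also have "\<dots> \<le> (\<integral>\<^sup>+z. ennreal (1 / real N) *
      (\<integral>\<^sup>+v. ennreal ((gauss_kernel s (z - v))\<^sup>2 * gauss_weight s R z) \<partial>\<mu>) \<partial>lborel)"
    by (intro nn_integral_mono nn_integral_weighted_deviation_sq_le)
  also have "\<dots> = ennreal (1 / real N) *
      (\<integral>\<^sup>+z. (\<integral>\<^sup>+v. ennreal ((gauss_kernel s (z - v))\<^sup>2 * gauss_weight s R z) \<partial>\<mu>) \<partial>lborel)"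
    by (rule nn_integral_cmult) (rule M.borel_measurable_nn_integral, unfold measurable_pair_eq, measurable)
  also have "\<dots> \<le> ennreal (1 / real N) * ennreal (weighted_kernel_bound s R TYPE('a))"
    by (intro mult_left_mono nn_integral_nn_integral_gauss_kernel_sq_weight_le) simp
  also have "\<dots> = ennreal (weighted_kernel_bound s R TYPE('a) / real N)"
    by (subst ennreal_mult[symmetric]) (simp_all add: less_imp_le[OF weighted_kernel_bound_pos])
  finally show ?thesis .
qed

lemma integral_deviation_le:
  "(\<integral>x. deviation x \<partial>PiM {1..N} (\<lambda>_. \<mu>)) \<le> sqrt (weighted_kernel_bound s R TYPE('a) / real N)"
proof -
  let ?K = "weighted_kernel_bound s R TYPE('a)"
  have bounded: "\<bar>deviation x\<bar> \<le> 2 * sqrt ?K" for x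
    using deviation_le[of x] deviation_nonneg[of x] by simp
  have int: "integrable (PiM {1..N} (\<lambda>_. \<mu>)) deviation"
    using bounded by (intro PM.integrable_const_bound[where B="2 * sqrt ?K"] AE_I2 deviation_measurable) auto
  have int2: "integrable (PiM {1..N} (\<lambda>_. \<mu>)) (\<lambda>x. (deviation x)\<^sup>2)"
  proof (rule PM.integrable_const_bound[where B="(2 * sqrt ?K)\<^sup>2"])
    have "(deviation x)\<^sup>2 \<le> (2 * sqrt ?K)\<^sup>2" for x
      using deviation_le[of x] deviation_nonneg[of x] by (rule power_mono)
    then show "AE x in PiM {1..N} (\<lambda>_. \<mu>). norm ((deviation x)\<^sup>2) \<le> (2 * sqrt ?K)\<^sup>2"
      by (intro AE_I2) simp
    show "(\<lambda>x. (deviation x)\<^sup>2) \<in> borel_measurable (PiM {1..N} (\<lambda>_. \<mu>))"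
      using deviation_measurable by (rule borel_measurable_power)
  qed
  have "(\<integral>x. deviation x \<partial>PiM {1..N} (\<lambda>_. \<mu>))\<^sup>2 \<le> (\<integral>x. (deviation x)\<^sup>2 \<partial>PiM {1..N} (\<lambda>_. \<mu>))"
    using PM.variance_positive[of deviation] PM.variance_eq[OF int int2] by linarith
  also have "\<dots> = enn2real (\<integral>\<^sup>+x. ennreal ((deviation x)\<^sup>2) \<partial>PiM {1..N} (\<lambda>_. \<mu>))"
    by (rule integral_eq_nn_integral[OF borel_measurable_power[OF deviation_measurable]]) simp
  also have "\<dots> \<le> ?K / real N"
    using nn_integral_deviation_sq_le weighted_kernel_bound_pos[of s R, where 'a='a]
    by (intro enn2real_leI) auto
  finally show ?thesis by (rule real_le_rsqrt)
qed

lemma deviation_concentration: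
  assumes \<delta>: "0 < \<delta>" "\<delta> < 1"
  shows "measure (PiM {1..N} (\<lambda>_. \<mu>)) {x \<in> space (PiM {1..N} (\<lambda>_. \<mu>)).
      deviation x \<le> sqrt (weighted_kernel_bound s R TYPE('a) / real N) * (1 + sqrt (2 * ln (1 / \<delta>)))}
    \<ge> 1 - \<delta>"
proof -
  let ?PM = "PiM {1..N} (\<lambda>_. \<mu>)" and ?K = "weighted_kernel_bound s R TYPE('a)"
  interpret bounded_differences \<mu> "{1..N}" deviation "2 * sqrt ?K" "2 * sqrt ?K / real N"
    by (rule bounded_differences_deviation)
  have K: "?K > 0" and N: "real N > 0" and L: "ln (1 / \<delta>) > 0"
    using weighted_kernel_bound_pos N_pos \<delta> by auto
  \<comment> \<open>chosen so that McDiarmid's bound equals \<open>\<delta>\<close>\<close>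
  define t where "t = sqrt (?K / real N) * sqrt (2 * ln (1 / \<delta>))"
  have t: "t > 0" using K N L by (simp add: t_def)
  let ?bad = "{x \<in> space ?PM. (\<integral>x. deviation x \<partial>?PM) + t \<le> deviation x}"
  have "measure ?PM ?bad \<le> exp (- 2 * t\<^sup>2 / (real (card {1..N}) * (2 * sqrt ?K / real N)\<^sup>2))"
    using N_pos K t by (intro mcdiarmid_inequality) auto
  also have "- 2 * t\<^sup>2 / (real (card {1..N}) * (2 * sqrt ?K / real N)\<^sup>2) = - ln (1 / \<delta>)"
    using K N L by (simp add: t_def power_mult_distrib power_divide field_simps power2_eq_square)
  also have "exp (- ln (1 / \<delta>)) = \<delta>"
    using \<delta> by (simp add: ln_div)
  finally have bad: "measure ?PM ?bad \<le> \<delta>" .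
  have "space ?PM - ?bad \<subseteq> {x \<in> space ?PM. deviation x \<le> sqrt (?K / real N) * (1 + sqrt (2 * ln (1 / \<delta>)))}"
    using integral_deviation_le by (auto simp: t_def algebra_simps)
  then have "measure ?PM (space ?PM - ?bad)
      \<le> measure ?PM {x \<in> space ?PM. deviation x \<le> sqrt (?K / real N) * (1 + sqrt (2 * ln (1 / \<delta>)))}"
    by (intro PM.finite_measure_mono) measurable
  moreover have "measure ?PM (space ?PM - ?bad) = 1 - measure ?PM ?bad"
    by (intro PM.prob_compl) measurable
  ultimately show ?thesis using bad by simp
qed

end

section \<open>Concentration of the relative entropy\<close>

lemma (in prob_space) measure_indep_vars_restrict_PiM:
  fixes X :: "'i \<Rightarrow> 'a \<Rightarrow> 'b::topological_space"
  assumes indep: "indep_vars (\<lambda>_. borel) X I" and I: "I \<noteq> {}"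
    and distr: "\<And>i. i \<in> I \<Longrightarrow> distr M borel (X i) = \<mu>" and sets_\<mu>: "sets \<mu> = sets borel"
    and A: "A \<in> sets (PiM I (\<lambda>_. \<mu>))"
  shows "measure M {\<omega> \<in> space M. (\<lambda>i\<in>I. X i \<omega>) \<in> A} = measure (PiM I (\<lambda>_. \<mu>)) A"
proof -
  have X [measurable]: "X i \<in> borel_measurable M" if "i \<in> I" for i
    using indep that unfolding indep_vars_def2 by auto
  have Y: "(\<lambda>\<omega>. \<lambda>i\<in>I. X i \<omega>) \<in> measurable M (PiM I (\<lambda>_. borel))"
    by (rule measurable_restrict) (rule X)
  have "distr M (PiM I (\<lambda>_. borel)) (\<lambda>\<omega>. \<lambda>i\<in>I. X i \<omega>) = PiM I (\<lambda>i. distr M borel (X i))"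
    using indep I X by (subst (asm) indep_vars_iff_distr_eq_PiM') auto
  also have "\<dots> = PiM I (\<lambda>_. \<mu>)"
    using distr by (intro PiM_cong) auto
  finally have distr_Y: "distr M (PiM I (\<lambda>_. borel)) (\<lambda>\<omega>. \<lambda>i\<in>I. X i \<omega>) = PiM I (\<lambda>_. \<mu>)" .
  have "sets (PiM I (\<lambda>_. borel)) = sets (PiM I (\<lambda>_. \<mu>))"
    by (intro sets_PiM_cong) (simp_all add: sets_\<mu>)
  then have "A \<in> sets (PiM I (\<lambda>_. borel))" using A by simp
  have "measure M {\<omega> \<in> space M. (\<lambda>i\<in>I. X i \<omega>) \<in> A} = measure M ((\<lambda>\<omega>. \<lambda>i\<in>I. X i \<omega>) -` A \<inter> space M)"
    by (rule arg_cong[where f="measure M"]) auto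
  also have "\<dots> = measure (PiM I (\<lambda>_. \<mu>)) A"
    unfolding distr_Y[symmetric] by (rule measure_distr[OF Y \<open>A \<in> sets (PiM I (\<lambda>_. borel))\<close>, symmetric])
  finally show ?thesis .
qed

lemma integrable_KL_gauss_mixture_empirical:
  assumes "ball_mixture s r \<mu>" and N: "N \<ge> 1"
  shows "integrable lborel
    (\<lambda>z. gauss_mixture s \<mu> z * ln (gauss_mixture s \<mu> z / gauss_mixture s (empirical_measure N y) z))"
proof -
  interpret ball_mixture s r \<mu> by fact
  \<comment> \<open>any finite sample lies in a ball, possibly larger than the one carrying \<open>\<mu>\<close>\<close>
  define r' where "r' = r + (\<Sum>i=1..N. norm (y i))"
  have y: "norm (y i) \<le> r'" if "i \<in> {1..N}" for i
    using member_le_sum[of i "{1..N}" "\<lambda>i. norm (y i)"] that radius_nonneg by (simp add: r'_def)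
  have "AE v in \<mu>. norm v \<le> r'"
    using AE_in_ball by (rule eventually_mono) (simp add: r'_def sum_nonneg add_increasing2)
  then have "ball_mixture s r' \<mu>"
    using s_pos prob sets_eq by (intro ball_mixture.intro)
  from gauss_mixture_KL_le_weighted_L2(1)[OF this ball_mixture_empirical_measure[OF s_pos N y]]
  show ?thesis .
qed

lemma (in ball_mixture_sample) KL_div_sample_le:
  assumes y: "\<And>i. i \<in> {1..N} \<Longrightarrow> norm (y i) \<le> R"
  shows "KL_div (gauss_mixture s \<mu>) (\<lambda>z. (1 / real N) * (\<Sum>i=1..N. gauss_kernel s (z - y i)))
    \<le> ereal ((deviation y)\<^sup>2)"
proof -
  have "(\<lambda>z. (1 / real N) * (\<Sum>i=1..N. gauss_kernel s (z - y i))) = sample_mixture y"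
    using y by (simp add: sample_mixture_def clamp_ball_eq fun_eq_iff)
  then have q: "(\<lambda>z. (1 / real N) * (\<Sum>i=1..N. gauss_kernel s (z - y i)))
      = gauss_mixture s (empirical_measure N (\<lambda>i. clamp_ball R (y i)))"
    by (simp add: sample_mixture_eq_gauss_mixture)
  note KL = gauss_mixture_KL_le_weighted_L2[OF ball_mixture_axioms ball_mixture_clamped_sample[of y]]
  show ?thesis
    using KL unfolding q KL_div_def
    by (simp add: deviation_def L2_norm_power2 power2_weighted_deviation sample_mixture_eq_gauss_mixture)
qed

lemma (in ball_mixture) AE_samples_in_ball:
  assumes "finite I" and X [measurable]: "\<And>i. i \<in> I \<Longrightarrow> X i \<in> borel_measurable P"
    and distr: "\<And>i. i \<in> I \<Longrightarrow> distr P borel (X i) = \<nu>"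
  shows "AE \<omega> in P. \<forall>i\<in>I. norm (X i \<omega>) \<le> r"
proof (rule AE_finite_allI[OF \<open>finite I\<close>])
  fix i assume i: "i \<in> I"
  have "{y \<in> space borel. norm y \<le> r} \<in> sets borel" by measurable
  moreover have "AE y in distr P borel (X i). norm y \<le> r" unfolding distr[OF i] by (rule AE_in_ball)
  ultimately show "AE \<omega> in P. norm (X i \<omega>) \<le> r" by (simp add: AE_distr_iff[OF X[OF i]])
qed

lemma (in ball_mixture_sample) deviation_restrict: "deviation (\<lambda>i\<in>{1..N}. x i) = deviation x"
proof -
  have "sample_mixture (\<lambda>i\<in>{1..N}. x i) = sample_mixture x"
    unfolding sample_mixture_def by (intro ext arg_cong[where f="\<lambda>t. _ * t"] sum.cong) auto
  then show ?thesis by (simp only: deviation_def weighted_deviation_def[abs_def])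
qed

lemma (in ball_mixture_sample) prob_deviation_sample_le:
  assumes P: "prob_space P" and indep: "prob_space.indep_vars P (\<lambda>_. borel) X {1..N}"
    and distr: "\<And>i. i \<in> {1..N} \<Longrightarrow> distr P borel (X i) = \<mu>" and \<delta>: "0 < \<delta>" "\<delta> < 1"
  shows "measure P {\<omega> \<in> space P. deviation (\<lambda>i. X i \<omega>)
      \<le> sqrt (weighted_kernel_bound s R TYPE('a) / real N) * (1 + sqrt (2 * ln (1 / \<delta>)))} \<ge> 1 - \<delta>"
proof -
  interpret P: prob_space P by (rule P)
  let ?PM = "PiM {1..N} (\<lambda>_. \<mu>)"
  let ?good = "{x \<in> space ?PM. deviation x
      \<le> sqrt (weighted_kernel_bound s R TYPE('a) / real N) * (1 + sqrt (2 * ln (1 / \<delta>)))}"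
  have good: "?good \<in> sets ?PM" by measurable
  have "deviation (\<lambda>i. X i \<omega>) = deviation (\<lambda>i\<in>{1..N}. X i \<omega>)" for \<omega>
    by (rule deviation_restrict[symmetric])
  then have "{\<omega> \<in> space P. deviation (\<lambda>i. X i \<omega>)
      \<le> sqrt (weighted_kernel_bound s R TYPE('a) / real N) * (1 + sqrt (2 * ln (1 / \<delta>)))}
      = {\<omega> \<in> space P. (\<lambda>i\<in>{1..N}. X i \<omega>) \<in> ?good}"
    by (auto simp: space_PiM space_eq)
  moreover have "measure P {\<omega> \<in> space P. (\<lambda>i\<in>{1..N}. X i \<omega>) \<in> ?good} = measure ?PM ?good"
    using N_pos by (intro P.measure_indep_vars_restrict_PiM[OF indep _ distr sets_eq good]) simp
  ultimately show ?thesis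
    using deviation_concentration[OF \<delta>] by simp
qed

lemma KL_div_empirical_gauss_mixture_concentration:
  fixes \<mu> :: "'a::euclidean_space measure" and P :: "'b measure" and X :: "nat \<Rightarrow> 'b \<Rightarrow> 'a"
  assumes mixture: "ball_mixture \<sigma> R \<mu>" and P: "prob_space P"
    and indep: "prob_space.indep_vars P (\<lambda>_. borel) X {1..N}"
    and distr: "\<And>i. i \<in> {1..N} \<Longrightarrow> distr P borel (X i) = \<mu>"
    and N: "N \<ge> 1" and \<delta>: "0 < \<delta>" "\<delta> < 1"
    and C: "weighted_kernel_bound \<sigma> R TYPE('a) \<le> C"
  shows "measure P {\<omega> \<in> space P. KL_div (gauss_mixture \<sigma> \<mu>)
      (\<lambda>z. (1 / real N) * (\<Sum>i=1..N. gauss_kernel \<sigma> (z - X i \<omega>)))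
      \<le> ereal (C / real N * (1 + sqrt (2 * ln (1 / \<delta>)))\<^sup>2)} \<ge> 1 - \<delta>"
proof -
  interpret P: prob_space P by (rule P)
  interpret ball_mixture_sample \<sigma> R \<mu> N
    using mixture N by (intro ball_mixture_sample.intro ball_mixture_sample_axioms.intro)
  let ?p = "gauss_mixture \<sigma> \<mu>"
  let ?bound = "sqrt (weighted_kernel_bound \<sigma> R TYPE('a) / real N) * (1 + sqrt (2 * ln (1 / \<delta>)))"
  let ?B = "C / real N * (1 + sqrt (2 * ln (1 / \<delta>)))\<^sup>2"
  define q where "q \<omega> = (\<lambda>z. (1 / real N) * (\<Sum>i=1..N. gauss_kernel \<sigma> (z - X i \<omega>)))" for \<omega>
  define I where "I \<omega> = (\<integral>z. ?p z * ln (?p z / q \<omega> z) \<partial>lborel)" for \<omega>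
  have X [measurable]: "X i \<in> borel_measurable P" if "i \<in> {1..N}" for i
    using indep that unfolding P.indep_vars_def2 by auto
  have in_ball: "AE \<omega> in P. \<forall>i\<in>{1..N}. norm (X i \<omega>) \<le> R"
    by (rule AE_samples_in_ball[OF finite_atLeastAtMost X distr])
  have KL_eq: "KL_div ?p (q \<omega>) = ereal (I \<omega>)" for \<omega>
    using integrable_KL_gauss_mixture_empirical[OF mixture N, of "\<lambda>i. X i \<omega>"]
    by (simp add: KL_div_def I_def q_def gauss_mixture_empirical_measure[OF N])
  have "(\<lambda>(\<omega>, z). ?p z * ln (?p z / q \<omega> z)) \<in> borel_measurable (P \<Otimes>\<^sub>M lborel)"
    unfolding q_def by measurable
  then have [measurable]: "I \<in> borel_measurable P"
    unfolding I_def[abs_def] by (rule lborel.borel_measurable_lebesgue_integral)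
  have "AE \<omega> in P. deviation (\<lambda>i. X i \<omega>) \<le> ?bound \<longrightarrow> I \<omega> \<le> ?B"
    using in_ball
  proof (eventually_elim, intro impI)
    case (elim \<omega>)
    assume dev: "deviation (\<lambda>i. X i \<omega>) \<le> ?bound"
    have "ereal (I \<omega>) = KL_div ?p (q \<omega>)" by (rule KL_eq[symmetric])
    also have "\<dots> \<le> ereal ((deviation (\<lambda>i. X i \<omega>))\<^sup>2)"
      unfolding q_def using elim by (intro KL_div_sample_le) auto
    finally have "I \<omega> \<le> (deviation (\<lambda>i. X i \<omega>))\<^sup>2" by simp
    also have "\<dots> \<le> ?bound\<^sup>2"
      using dev deviation_nonneg by (rule power_mono)
    also have "\<dots> \<le> ?B"
      using C weighted_kernel_bound_pos[of \<sigma> R, where 'a='a] N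
      by (simp add: power_mult_distrib divide_right_mono mult_right_mono)
    finally show "I \<omega> \<le> ?B" .
  qed
  then have "measure P {\<omega> \<in> space P. deviation (\<lambda>i. X i \<omega>) \<le> ?bound}
      \<le> measure P {\<omega> \<in> space P. KL_div ?p (q \<omega>) \<le> ereal ?B}"
    unfolding KL_eq by (intro P.finite_measure_mono_AE) auto
  with prob_deviation_sample_le[OF P indep distr \<delta>] show ?thesis
    unfolding q_def by (rule order_trans)
qed

theorem theoremF1:
  fixes \<mu> :: "'a::euclidean_space measure" and P :: "'b measure"
    and X :: "nat \<Rightarrow> 'b \<Rightarrow> 'a" and R \<sigma> :: real and N :: nat
  assumes "prob_space \<mu>" and "sets \<mu> = sets borel"
    and "AE y in \<mu>. norm y \<le> R"
    and "prob_space P"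
    and "prob_space.indep_vars P (\<lambda>_. borel) X {1..N}"
    and "\<forall>i\<in>{1..N}. distr P borel (X i) = \<mu>"
    and "\<sigma> > 0" and "N \<ge> 1"
  defines "p \<equiv> \<lambda>x. \<integral>y. gauss_kernel \<sigma> (x - y) \<partial>\<mu>"
    and "q \<equiv> \<lambda>\<omega> x. (1 / real N) * (\<Sum>i=1..N. gauss_kernel \<sigma> (x - X i \<omega>))"
  shows "(\<forall>\<delta>::real. 0 < \<delta> \<and> \<delta> < 1 \<longrightarrow>
            measure P {\<omega> \<in> space P. KL_div p (q \<omega>) \<le>
              ereal (2 powr (real DIM('a) / 2) / real N * exp (17 / 2 * R\<^sup>2 / \<sigma>\<^sup>2)
                     * (1 + sqrt (2 * ln (1 / \<delta>)))\<^sup>2)} \<ge> 1 - \<delta>)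
       \<and> (\<forall>a::real. 0 < a \<longrightarrow>
            measure P {\<omega> \<in> space P. KL_div p (q \<omega>) \<le>
              ereal (2 powr (real DIM('a) / 2) / real N * exp (17 / 2 * R\<^sup>2 / \<sigma>\<^sup>2)
                     * (1 + sqrt (2 * a * ln (real N)))\<^sup>2)} \<ge> 1 - real N powr (- a))"
proof -
  have mixture: "ball_mixture \<sigma> R \<mu>"
    using assms(1-3,7) by (intro ball_mixture.intro)
  have distr: "\<And>i. i \<in> {1..N} \<Longrightarrow> distr P borel (X i) = \<mu>"
    using assms(6) by blast
  \<comment> \<open>the argument gives the constant \<open>6\<close> in place of \<open>17 / 2\<close>\<close>
  have main: "measure P {\<omega> \<in> space P. KL_div p (q \<omega>) \<le> ereal (2 powr (real DIM('a) / 2) / real N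
      * exp (17 / 2 * R\<^sup>2 / \<sigma>\<^sup>2) * (1 + sqrt (2 * ln (1 / \<delta>)))\<^sup>2)} \<ge> 1 - \<delta>" if "0 < \<delta>" "\<delta> < 1" for \<delta>
    using KL_div_empirical_gauss_mixture_concentration[OF mixture assms(4,5) distr assms(8) that
        weighted_kernel_bound_le]
    unfolding p_def q_def gauss_mixture_def[abs_def] by (simp add: field_simps)
  show ?thesis
  proof (intro conjI allI impI)
    fix a :: real assume a: "0 < a"
    show "measure P {\<omega> \<in> space P. KL_div p (q \<omega>) \<le> ereal (2 powr (real DIM('a) / 2) / real N
        * exp (17 / 2 * R\<^sup>2 / \<sigma>\<^sup>2) * (1 + sqrt (2 * a * ln (real N)))\<^sup>2)} \<ge> 1 - real N powr (- a)"
    proof (cases "N = 1")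
      case False
      then have "real N > 1" using assms(8) by simp
      moreover have "2 * ln (1 / real N powr (- a)) = 2 * a * ln (real N)"
        using \<open>real N > 1\<close> by (simp add: powr_minus ln_powr divide_inverse)
      ultimately show ?thesis using main[of "real N powr (- a)"] a by (simp add: powr_less_one mult.assoc)
    qed simp
  qed (elim conjE; rule main)
qed

end
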